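(* Let $n\ge 3$ and let $(\alpha,\beta)$ satisfy $\beta\ge 0$, $0<\alpha+\beta<n-\beta$ and $\frac{n-\alpha-2\beta}{2n}+\frac{n-\alpha}{2(n-1)}<1$. For non-negative integers $l$ let $$A_l^{\{\alpha,\beta\}}=\frac{\Gamma(l+\frac{n-\alpha}2)^2}{\Gamma(l+\frac n2)^2}\int_0^1 d^{q-2}_{\alpha,\beta}(\sqrt t)(1-t)^{2(\beta+\alpha-1)}t^{\frac n2+l-1}F\Big(l+\frac{n+\alpha}2-1,\frac\alpha2;l+\frac n2;t\Big)^2\mathrm dt.$$ Then for sufficiently large $l$ and any $\epsilon>0$, $$A_l^{\{\alpha,\beta\}}=\begin{cases}O\big(l^{-(1+q(\alpha+\beta-1))}\big),&\alpha<1,\\ O\big(l^{-1-q\beta+\epsilon}\big),&\alpha=1,\\ O\big(l^{-1-q\beta}\big),&\alpha>1.\end{cases}$$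
   Context: $q=\frac{2n}{n-\alpha-2\beta}$. $F$ is the Gauss hypergeometric function. $d_{\alpha,\beta}(\xi)=\frac{\pi^{n/2}2^{1-\beta}}{\Gamma(n/2)}(1-|\xi|^2)^{\alpha+\beta-1}F\big(\frac{n+\alpha}{2}-1,\frac\alpha2;\frac n2;|\xi|^2\big)$ is radial on the unit ball and $d_{\alpha,\beta}(\sqrt t)$ denotes its value at radius $\sqrt t$. *)

theory Defs
  imports "HOL-Analysis.Analysis" "HOL-Library.Landau_Symbols"
begin

text \<open>Gauss hypergeometric function F(a,b;c;z), defined by its power series
  (convergent for |z| < 1, which is all that matters for the integrals below).\<close>
definition hypergeom :: "real \<Rightarrow> real \<Rightarrow> real \<Rightarrow> real \<Rightarrow> real" where
  "hypergeom a b c z =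
     (\<Sum>k. pochhammer a k * pochhammer b k / (pochhammer c k * fact k) * z ^ k)"

definition qexp :: "nat \<Rightarrow> real \<Rightarrow> real \<Rightarrow> real" where
  "qexp n \<alpha> \<beta> = 2 * real n / (real n - \<alpha> - 2 * \<beta>)"

text \<open>d_{alpha,beta} evaluated at radius r (it is radial).\<close>
definition d_ab :: "nat \<Rightarrow> real \<Rightarrow> real \<Rightarrow> real \<Rightarrow> real" where
  "d_ab n \<alpha> \<beta> r =
     pi powr (real n / 2) * 2 powr (1 - \<beta>) / Gamma (real n / 2)
     * (1 - r\<^sup>2) powr (\<alpha> + \<beta> - 1)
     * hypergeom ((real n + \<alpha>) / 2 - 1) (\<alpha> / 2) (real n / 2) (r\<^sup>2)"

definition A_coeff :: "nat \<Rightarrow> real \<Rightarrow> real \<Rightarrow> nat \<Rightarrow> real" where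
  "A_coeff n \<alpha> \<beta> l =
     Gamma (real l + (real n - \<alpha>) / 2) ^ 2 / Gamma (real l + real n / 2) ^ 2
     * integral {0..1} (\<lambda>t.
         d_ab n \<alpha> \<beta> (sqrt t) powr (qexp n \<alpha> \<beta> - 2)
         * (1 - t) powr (2 * (\<beta> + \<alpha> - 1))
         * t powr (real n / 2 + real l - 1)
         * (hypergeom (real l + (real n + \<alpha>) / 2 - 1) (\<alpha> / 2) (real l + real n / 2) t) ^ 2)"

end

theory Submission
  imports Defs "HOL-Real_Asymp.Real_Asymp"
begin

(*
  Write b = \<alpha>/2 and c = l + n/2.  Since d(sqrt t) is a constant times
  (1 - t) powr (\<alpha> + \<beta> - 1) * F(n/2 - 1 + b, b; n/2; t), the integrand of A_l is
  t powr (c - 1) times powers of (1 - t), once F(c - 1 + b, b; c; t) is bounded by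
  sums of terms c powr \<theta> * (1 - t) powr \<sigma> uniformly in c.  For b > 0 such bounds
  come from comparing the hypergeometric coefficients with binomial coefficients,
  using two-sided estimates for Gamma(z + d) / Gamma z obtained from the
  log-convexity of Gamma; for b \<le> 0 they come from Euler's integral.  Integrating
  against t powr (c - 1) gives Beta integrals Beta c (p + 1) = O(c powr (- p - 1)),
  and the Gamma prefactor is O(l powr (- \<alpha>)).  The regimes \<alpha> \<le> 0, 0 < \<alpha> < 1,
  \<alpha> = 1 and \<alpha> > 1 differ only in the bound used for F.
*)

section \<open>Ratios of Gamma values\<close>

lemma Gamma_plus1_pos: "x > 0 \<Longrightarrow> Gamma (x + 1) = x * Gamma (x :: real)"
  by (intro Gamma_plus1) (auto dest: nonpos_Ints_nonpos)

lemma ln_Gamma_increment_bounds: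
  fixes z d :: real
  assumes z: "z > 0" and d: "d > 0"
  shows "d * ln z \<le> ln (Gamma (z + 1 + d)) - ln (Gamma (z + 1))"
    and "ln (Gamma (z + 1 + d)) - ln (Gamma (z + 1)) \<le> d * ln (z + 1 + d)"
proof -
  \<comment> \<open>By log-convexity, the slope of \<open>ln \<circ> Gamma\<close> on \<open>[z+1, z+1+d]\<close> lies between its slopes
    on \<open>[z, z+1]\<close> and \<open>[z+1+d, z+2+d]\<close>, which are \<open>ln z\<close> and \<open>ln (z+1+d)\<close>.\<close>
  let ?f = "ln \<circ> Gamma :: real \<Rightarrow> real"
  have cv: "convex_on {0<..} ?f" by (rule log_convex_Gamma_real)
  have unit_slope: "?f (x + 1) - ?f x = ln x" if "x > 0" for x :: real
    using that ln_mult_pos[OF that Gamma_real_pos[OF that]] by (simp add: Gamma_plus1_pos)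
  have a: "(?f z - ?f (z+1)) / (z - (z+1)) \<le> (?f z - ?f (z+1+d)) / (z - (z+1+d))"
    by (rule convex_on_slope_le(1)[OF cv]) (use z d in auto)
  have b: "(?f z - ?f (z+1+d)) / (z - (z+1+d)) \<le> (?f (z+1) - ?f (z+1+d)) / ((z+1) - (z+1+d))"
    by (rule convex_on_slope_le(2)[OF cv]) (use z d in auto)
  have "ln z \<le> (ln (Gamma (z + 1 + d)) - ln (Gamma (z + 1))) / d"
    using order_trans[OF a b] unit_slope[OF z] d by (simp add: field_simps)
  then show "d * ln z \<le> ln (Gamma (z + 1 + d)) - ln (Gamma (z + 1))"
    using d by (simp add: field_simps)
  have a2: "(?f (z+1) - ?f (z+1+d)) / ((z+1) - (z+1+d)) \<le> (?f (z+1) - ?f (z+2+d)) / ((z+1) - (z+2+d))"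
    by (rule convex_on_slope_le(1)[OF cv]) (use z d in auto)
  have b2: "(?f (z+1) - ?f (z+2+d)) / ((z+1) - (z+2+d)) \<le> (?f (z+1+d) - ?f (z+2+d)) / ((z+1+d) - (z+2+d))"
    by (rule convex_on_slope_le(2)[OF cv]) (use z d in auto)
  have "ln (Gamma (z + 2 + d)) - ln (Gamma (z + 1 + d)) = ln (z + 1 + d)"
    using unit_slope[of "z+1+d"] z d by (simp add: add_ac)
  then have "(ln (Gamma (z + 1 + d)) - ln (Gamma (z + 1))) / d \<le> ln (z + 1 + d)"
    using order_trans[OF a2 b2] d by (simp add: field_simps)
  then show "ln (Gamma (z + 1 + d)) - ln (Gamma (z + 1)) \<le> d * ln (z + 1 + d)"
    using d by (simp add: field_simps)
qed

lemma Gamma_ratio_unit_shift_bounds: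
  fixes z d :: real
  assumes z: "z > 0" and d: "d \<ge> 0"
  shows "z powr d \<le> Gamma (z + 1 + d) / Gamma (z + 1)"
    and "Gamma (z + 1 + d) / Gamma (z + 1) \<le> (z + 1 + d) powr d"
proof -
  have pos: "Gamma (z + 1 + d) > 0" "Gamma (z + 1) > 0" using z d by auto
  have eq: "Gamma (z + 1 + d) / Gamma (z + 1) = exp (ln (Gamma (z + 1 + d)) - ln (Gamma (z + 1)))"
    using pos by (simp add: exp_diff)
  show "z powr d \<le> Gamma (z + 1 + d) / Gamma (z + 1)"
  proof (cases "d = 0")
    case False
    then show ?thesis unfolding eq using ln_Gamma_increment_bounds(1)[OF z, of d] d z
      by (simp add: powr_def)
  qed (use pos in simp)
  show "Gamma (z + 1 + d) / Gamma (z + 1) \<le> (z + 1 + d) powr d"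
  proof (cases "d = 0")
    case False
    then show ?thesis unfolding eq using ln_Gamma_increment_bounds(2)[OF z, of d] d z
      by (simp add: powr_def)
  qed (use pos z in simp)
qed

lemma Gamma_ratio_bounds_nonneg:
  fixes z z0 d :: real
  assumes z0: "z0 > 0" and d: "d \<ge> 0" and z: "z \<ge> z0"
  shows "z0 / (z0 + d) * z powr d \<le> Gamma (z + d) / Gamma z"
    and "Gamma (z + d) / Gamma z \<le> ((z0 + 1 + d) / z0) powr d * z powr d"
proof -
  have zp: "z > 0" using z z0 by linarith
  have "Gamma (z + 1 + d) = (z + d) * Gamma (z + d)" "Gamma (z + 1) = z * Gamma z"
    using Gamma_plus1_pos[of "z + d"] Gamma_plus1_pos[of z] zp d by (auto simp: add_ac)
  then have "z / (z + d) * (Gamma (z + 1 + d) / Gamma (z + 1))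
      = ((z + d) * z * Gamma (z + d)) / ((z + d) * z * Gamma z)"
    by (simp add: field_simps)
  also have "\<dots> = Gamma (z + d) / Gamma z"
    using zp d by (intro mult_divide_mult_cancel_left) auto
  finally have eq: "Gamma (z + d) / Gamma z = z / (z + d) * (Gamma (z + 1 + d) / Gamma (z + 1))" ..
  have "z0 / (z0 + d) \<le> z / (z + d)"
    using z z0 d mult_right_mono[OF z d] by (simp add: divide_simps algebra_simps)
  then show "z0 / (z0 + d) * z powr d \<le> Gamma (z + d) / Gamma z"
    unfolding eq by (rule mult_mono[OF _ Gamma_ratio_unit_shift_bounds(1)[OF zp d]]) (use zp d in auto)
  have "z + 1 + d \<le> (z0 + 1 + d) / z0 * z"
    using z0 mult_left_mono[OF z, of "1 + d"] d by (simp add: divide_simps algebra_simps)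
  then have "(z + 1 + d) powr d \<le> ((z0 + 1 + d) / z0 * z) powr d"
    using zp d by (intro powr_mono2) auto
  also have "\<dots> = ((z0 + 1 + d) / z0) powr d * z powr d"
    using z0 d zp by (subst powr_mult) auto
  finally have shift: "(z + 1 + d) powr d \<le> ((z0 + 1 + d) / z0) powr d * z powr d" .
  have "Gamma (z + d) / Gamma z \<le> 1 * (z + 1 + d) powr d"
    unfolding eq by (rule mult_mono[OF _ Gamma_ratio_unit_shift_bounds(2)[OF zp d]]) (use zp d in auto)
  with shift show "Gamma (z + d) / Gamma z \<le> ((z0 + 1 + d) / z0) powr d * z powr d" by simp
qed

lemma Gamma_ratio_bounds_neg:
  fixes z z0 d :: real
  assumes z0: "z0 + d > 0" and d: "d < 0" and z: "z \<ge> z0"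
  shows "((z0 + d) / (z0 + 1)) powr (- d) * z powr d \<le> Gamma (z + d) / Gamma z"
    and "Gamma (z + d) / Gamma z \<le> (z0 / (z0 + d)) powr (1 - d) * z powr d"
proof -
  \<comment> \<open>Apply the bounds for the nonnegative shift \<open>-d\<close> at \<open>w = z + d\<close>.\<close>
  define w0 where "w0 = z0 + d"
  define w where "w = z + d"
  have w0: "w0 > 0" and ww: "w \<ge> w0" and wp: "w > 0" and zp: "z > 0" and z0p: "z0 > 0"
    using z0 z d unfolding w0_def w_def by auto
  have Gpos: "Gamma w > 0" "Gamma z > 0" using wp zp by auto
  have ratio: "Gamma (z + d) / Gamma z = 1 / (Gamma (w + - d) / Gamma w)"
    unfolding w_def using Gpos by (simp add: w_def)
  have lo: "w0 / (w0 + - d) * w powr (- d) \<le> Gamma (w + - d) / Gamma w"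
    and hi: "Gamma (w + - d) / Gamma w \<le> ((w0 + 1 + - d) / w0) powr (- d) * w powr (- d)"
    using Gamma_ratio_bounds_nonneg[OF w0 _ ww, of "- d"] d by auto
  have w_le_z: "w \<le> z" and z_le_w: "w0 / z0 * z \<le> w"
    using d z z0 mult_right_mono_neg[OF z, of d] unfolding w_def w0_def
    by (auto simp: divide_simps algebra_simps)
  have "Gamma (z + d) / Gamma z \<le> 1 / (w0 / (w0 + - d) * w powr (- d))"
    unfolding ratio using lo w0 wp d by (intro divide_left_mono mult_pos_pos) auto
  also have "\<dots> = z0 / w0 * w powr d"
    using w0 wp unfolding w0_def by (simp add: powr_minus field_simps)
  also have "\<dots> \<le> z0 / w0 * (w0 / z0 * z) powr d"
    using z_le_w w0 z0 zp d by (intro mult_left_mono powr_mono2') auto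
  also have "\<dots> = (z0 / w0) powr (1 - d) * z powr d"
    using w0 z0p zp by (simp add: powr_mult powr_divide powr_diff field_simps)
  finally show "Gamma (z + d) / Gamma z \<le> (z0 / (z0 + d)) powr (1 - d) * z powr d"
    unfolding w0_def .
  have "w powr (- d) \<le> z powr (- d)" using wp w_le_z d by (intro powr_mono2) auto
  then have "((z0 + 1) / w0) powr (- d) * w powr (- d) \<le> ((z0 + 1) / w0) powr (- d) * z powr (- d)"
    by (rule mult_left_mono) simp
  moreover have "w0 + 1 + - d = z0 + 1" unfolding w0_def by simp
  ultimately have "Gamma (w + - d) / Gamma w \<le> ((z0 + 1) / w0) powr (- d) * z powr (- d)"
    using hi by (metis order_trans)
  moreover have "Gamma (w + - d) / Gamma w > 0" using Gpos wp d by simp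
  ultimately have "1 / (((z0 + 1) / w0) powr (- d) * z powr (- d)) \<le> Gamma (z + d) / Gamma z"
    unfolding ratio using w0 zp z0 by (intro divide_left_mono mult_pos_pos) auto
  then show "((z0 + d) / (z0 + 1)) powr (- d) * z powr d \<le> Gamma (z + d) / Gamma z"
    using w0 zp z0 unfolding w0_def by (simp add: powr_minus powr_divide divide_simps)
qed

lemma Gamma_ratio_bounds:
  fixes z0 d :: real
  assumes z0: "z0 > 0" and zd: "z0 + d > 0"
  obtains k K where "k > 0" and "K > 0"
    and "\<And>z. z \<ge> z0 \<Longrightarrow> k * z powr d \<le> Gamma (z + d) / Gamma z"
    and "\<And>z. z \<ge> z0 \<Longrightarrow> Gamma (z + d) / Gamma z \<le> K * z powr d"
proof (cases "d \<ge> 0")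
  case True
  show ?thesis
    by (rule that[of "z0 / (z0 + d)" "((z0 + 1 + d) / z0) powr d"])
       (use z0 True Gamma_ratio_bounds_nonneg[OF z0 True] in auto)
next
  case False
  show ?thesis
    by (rule that[of "((z0 + d) / (z0 + 1)) powr (- d)" "(z0 / (z0 + d)) powr (1 - d)"])
       (use z0 zd False Gamma_ratio_bounds_neg[OF zd] in auto)
qed

lemma Gamma_ratio_inverse_bound:
  fixes z0 d :: real
  assumes "z0 > 0" and "z0 + d > 0"
  obtains K where "K > 0" and "\<And>z. z \<ge> z0 \<Longrightarrow> Gamma z / Gamma (z + d) \<le> K * z powr (- d)"
proof -
  obtain k where k: "k > 0" and lower: "\<And>z. z \<ge> z0 \<Longrightarrow> k * z powr d \<le> Gamma (z + d) / Gamma z"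
    using Gamma_ratio_bounds[OF assms] by metis
  show ?thesis
  proof (rule that[of "1 / k"])
    fix z assume z: "z \<ge> z0"
    then have "z > 0" "z + d > 0" using assms by auto
    then show "Gamma z / Gamma (z + d) \<le> 1 / k * z powr (- d)"
      using lower[OF z] k by (simp add: powr_minus divide_simps mult.commute)
  qed (use k in simp)
qed

lemma pochhammer_Gamma_pos: "(x::real) > 0 \<Longrightarrow> pochhammer x k = Gamma (x + real k) / Gamma x"
  by (intro pochhammer_Gamma) (auto dest: nonpos_Ints_nonpos)

lemma pochhammer_nonneg_real: "(x::real) \<ge> 0 \<Longrightarrow> pochhammer x n \<ge> 0"
  by (induction n) (auto simp: pochhammer_Suc)

lemma pochhammer_over_fact_bounds:
  fixes p :: real
  assumes p: "p > 0"
  obtains k K where "k > 0" and "K > 0"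
    and "\<And>j. k * (real j + 1) powr (p - 1) \<le> pochhammer p j / fact j"
    and "\<And>j. pochhammer p j / fact j \<le> K * (real j + 1) powr (p - 1)"
proof -
  have "0 < (1::real) + (p - 1)" using p by simp
  then obtain k K where k: "k > 0" and K: "K > 0"
    and lo: "\<And>z. z \<ge> 1 \<Longrightarrow> k * z powr (p - 1) \<le> Gamma (z + (p - 1)) / Gamma z"
    and hi: "\<And>z. z \<ge> 1 \<Longrightarrow> Gamma (z + (p - 1)) / Gamma z \<le> K * z powr (p - 1)"
    using Gamma_ratio_bounds[OF zero_less_one] by blast
  have Gp: "Gamma p > 0" using p by simp
  have eq: "pochhammer p j / fact j = (Gamma (real j + 1 + (p - 1)) / Gamma (real j + 1)) / Gamma p" for j
  proof -
    have "Gamma (1 + real j) = fact j" by (rule Gamma_fact)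
    then have "fact j = Gamma (real j + 1)" by (simp add: add.commute)
    then show ?thesis using pochhammer_Gamma_pos[OF p, of j] by (simp add: algebra_simps)
  qed
  show ?thesis
  proof (rule that[of "k / Gamma p" "K / Gamma p"])
    fix j :: nat
    show "k / Gamma p * (real j + 1) powr (p - 1) \<le> pochhammer p j / fact j"
      unfolding eq using divide_right_mono[OF lo[of "real j + 1"], of "Gamma p"] Gp by simp
    show "pochhammer p j / fact j \<le> K / Gamma p * (real j + 1) powr (p - 1)"
      unfolding eq using divide_right_mono[OF hi[of "real j + 1"], of "Gamma p"] Gp by simp
  qed (use k K Gp in simp_all)
qed

lemma pochhammer_ratio_bound:
  fixes c0 b :: real
  assumes c0: "c0 > 0" and cb: "c0 - 1 + b > 0"
  obtains K where "K > 0"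
    and "\<And>c j. c \<ge> c0 \<Longrightarrow> pochhammer (c - 1 + b) j / pochhammer c j \<le> K * ((c + real j) / c) powr (b - 1)"
proof -
  have "c0 + (b - 1) > 0" using cb by simp
  then obtain k K where k: "k > 0" and K: "K > 0"
    and lo: "\<And>z. z \<ge> c0 \<Longrightarrow> k * z powr (b - 1) \<le> Gamma (z + (b - 1)) / Gamma z"
    and hi: "\<And>z. z \<ge> c0 \<Longrightarrow> Gamma (z + (b - 1)) / Gamma z \<le> K * z powr (b - 1)"
    using Gamma_ratio_bounds[OF c0] by blast
  show ?thesis
  proof (rule that[of "K / k"])
    fix c :: real and j :: nat assume c: "c \<ge> c0"
    have cp: "c > 0" and ap: "c - 1 + b > 0" using c c0 cb by auto
    have "pochhammer (c - 1 + b) j / pochhammer c j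
        = (Gamma (c + real j + (b - 1)) / Gamma (c + real j)) / (Gamma (c + (b - 1)) / Gamma c)"
      using pochhammer_Gamma_pos[OF ap, of j] pochhammer_Gamma_pos[OF cp, of j]
      by (simp add: field_simps)
    also have "\<dots> \<le> (K * (c + real j) powr (b - 1)) / (k * c powr (b - 1))"
      using hi[of "c + real j"] lo[OF c] c k K cp by (intro frac_le) auto
    also have "\<dots> = K / k * ((c + real j) / c) powr (b - 1)"
      using cp by (simp add: powr_divide)
    finally show "pochhammer (c - 1 + b) j / pochhammer c j \<le> K / k * ((c + real j) / c) powr (b - 1)" .
  qed (use k K in simp)
qed

section \<open>Hypergeometric bounds by comparison of coefficients\<close>

lemma binomial_series_pochhammer:
  fixes p t :: real
  assumes "0 \<le> t" and "t < 1"
  shows "(\<lambda>k. pochhammer p k / fact k * t ^ k) sums ((1 - t) powr (- p))"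
proof -
  have "(\<lambda>k. ((- p) gchoose k) * (- t) ^ k) sums (1 + - t) powr (- p)"
    using assms by (intro gen_binomial_real) simp
  moreover have "((- p) gchoose k) * (- t) ^ k = pochhammer p k / fact k * t ^ k" for k
  proof -
    have "((- p) gchoose k) = (- 1) ^ k * (pochhammer p k / fact k)"
      using gbinomial_pochhammer[of "- p" k] by simp
    moreover have "(- t) ^ k = (- 1) ^ k * t ^ k" by (rule power_minus)
    moreover have "(- 1 :: real) ^ k * (- 1) ^ k = 1" by (simp flip: power_mult_distrib)
    ultimately show ?thesis by (metis (no_types, lifting) mult.assoc mult.left_commute mult_1)
  qed
  ultimately show ?thesis by simp
qed

definition hypergeom_coeff :: "real \<Rightarrow> real \<Rightarrow> real \<Rightarrow> nat \<Rightarrow> real" where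
  "hypergeom_coeff a b c k = pochhammer a k * pochhammer b k / (pochhammer c k * fact k)"

lemma hypergeom_eq_suminf: "hypergeom a b c z = (\<Sum>k. hypergeom_coeff a b c k * z ^ k)"
  unfolding hypergeom_def hypergeom_coeff_def ..

lemma hypergeom_coeff_nonneg: "a \<ge> 0 \<Longrightarrow> b \<ge> 0 \<Longrightarrow> c \<ge> 0 \<Longrightarrow> hypergeom_coeff a b c k \<ge> 0"
  unfolding hypergeom_coeff_def by (simp add: pochhammer_nonneg_real)

lemma one_le_hypergeom:
  assumes "a \<ge> 0" and "b \<ge> 0" and "c \<ge> 0" and "t \<ge> 0"
    and "summable (\<lambda>k. hypergeom_coeff a b c k * t ^ k)"
  shows "1 \<le> hypergeom a b c t"
proof -
  have "(\<Sum>k\<in>{0}. hypergeom_coeff a b c k * t ^ k) \<le> (\<Sum>k. hypergeom_coeff a b c k * t ^ k)"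
    using assms by (intro sum_le_suminf) (auto simp: hypergeom_coeff_nonneg)
  then show ?thesis by (simp add: hypergeom_eq_suminf hypergeom_coeff_def)
qed

lemma hypergeom_coeff_le_powr:
  fixes c0 b :: real
  assumes c0: "c0 > 0" and b: "b > 0" and cb: "c0 - 1 + b > 0"
  obtains K where "K > 0" and "\<And>c k. c \<ge> c0 \<Longrightarrow>
    hypergeom_coeff (c - 1 + b) b c k \<le> K * (((c + real k) / c) powr (b - 1) * (real k + 1) powr (b - 1))"
proof -
  obtain K0 where K0: "K0 > 0" and ratio: "\<And>c j. c \<ge> c0 \<Longrightarrow>
      pochhammer (c - 1 + b) j / pochhammer c j \<le> K0 * ((c + real j) / c) powr (b - 1)"
    using pochhammer_ratio_bound[OF c0 cb] by blast
  obtain k Kb where "k > 0" and Kb: "Kb > 0"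
    and "\<And>j. k * (real j + 1) powr (b - 1) \<le> pochhammer b j / fact j"
    and fact: "\<And>j. pochhammer b j / fact j \<le> Kb * (real j + 1) powr (b - 1)"
    using pochhammer_over_fact_bounds[OF b] by blast
  show ?thesis
  proof (rule that[of "K0 * Kb"])
    fix c :: real and k :: nat assume c: "c \<ge> c0"
    have "hypergeom_coeff (c - 1 + b) b c k = (pochhammer (c - 1 + b) k / pochhammer c k) * (pochhammer b k / fact k)"
      unfolding hypergeom_coeff_def by simp
    also have "\<dots> \<le> (K0 * ((c + real k) / c) powr (b - 1)) * (Kb * (real k + 1) powr (b - 1))"
      using ratio[OF c, of k] fact[of k] K0 b
      by (intro mult_mono) (auto intro!: divide_nonneg_nonneg pochhammer_nonneg_real)
    finally show "hypergeom_coeff (c - 1 + b) b c k \<le> K0 * Kb * (((c + real k) / c) powr (b - 1) * (real k + 1) powr (b - 1))"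
      by (simp add: mult_ac)
  qed (use K0 Kb in simp)
qed

lemma hypergeom_coeff_le_binomial_coeffs:
  fixes c0 b \<theta>1 \<theta>2 :: real
  assumes c0: "c0 > 0" and b: "b > 0" and cb: "c0 - 1 + b > 0" and \<theta>1: "\<theta>1 < b" and \<theta>2: "\<theta>2 < b"
  obtains K where "K > 0"
    and "\<And>c M1 M2 k. c \<ge> c0 \<Longrightarrow> M1 \<ge> 0 \<Longrightarrow> M2 \<ge> 0 \<Longrightarrow>
       ((c + real k) / c) powr (b - 1) \<le> M1 * (real k + 1) powr (- \<theta>1) + M2 * (real k + 1) powr (- \<theta>2) \<Longrightarrow>
       hypergeom_coeff (c - 1 + b) b c k
         \<le> K * (M1 * (pochhammer (b - \<theta>1) k / fact k) + M2 * (pochhammer (b - \<theta>2) k / fact k))"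
proof -
  \<comment> \<open>\<open>(b)\<^sub>k / k!\<close> is of order \<open>(k+1) powr (b - 1)\<close>, so \<open>(k+1) powr (- \<theta>)\<close> times it is
    of order \<open>(b - \<theta>)\<^sub>k / k!\<close>.\<close>
  obtain K0 where K0: "K0 > 0" and coeff: "\<And>c k. c \<ge> c0 \<Longrightarrow>
      hypergeom_coeff (c - 1 + b) b c k \<le> K0 * (((c + real k) / c) powr (b - 1) * (real k + 1) powr (b - 1))"
    using hypergeom_coeff_le_powr[OF c0 b cb] by blast
  have "b - \<theta>1 > 0" and "b - \<theta>2 > 0" using \<theta>1 \<theta>2 by auto
  then obtain k1 k2 where k: "k1 > 0" "k2 > 0"
    and low1: "\<And>j. k1 * (real j + 1) powr (b - \<theta>1 - 1) \<le> pochhammer (b - \<theta>1) j / fact j"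
    and low2: "\<And>j. k2 * (real j + 1) powr (b - \<theta>2 - 1) \<le> pochhammer (b - \<theta>2) j / fact j"
    using pochhammer_over_fact_bounds by metis
  define k0 where "k0 = min k1 k2"
  have k0: "k0 > 0" using k unfolding k0_def by simp
  have low: "(real j + 1) powr (b - \<theta> - 1) \<le> pochhammer (b - \<theta>) j / fact j / k0"
    if "k * (real j + 1) powr (b - \<theta> - 1) \<le> pochhammer (b - \<theta>) j / fact j" and "k \<ge> k0" for j \<theta> k
  proof -
    have "k0 * (real j + 1) powr (b - \<theta> - 1) \<le> pochhammer (b - \<theta>) j / fact j"
      using that by (meson mult_right_mono order_trans powr_ge_zero)
    then show ?thesis using k0 by (simp add: field_simps)
  qed
  show ?thesis
  proof (rule that[of "K0 / k0"])
    fix c M1 M2 :: real and k :: nat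
    assume c: "c \<ge> c0" and M1: "M1 \<ge> 0" and M2: "M2 \<ge> 0"
      and ratio: "((c + real k) / c) powr (b - 1) \<le> M1 * (real k + 1) powr (- \<theta>1) + M2 * (real k + 1) powr (- \<theta>2)"
    have "hypergeom_coeff (c - 1 + b) b c k
        \<le> K0 * ((M1 * (real k + 1) powr (- \<theta>1) + M2 * (real k + 1) powr (- \<theta>2)) * (real k + 1) powr (b - 1))"
      using coeff[OF c, of k] ratio K0 by (meson mult_left_mono mult_right_mono order_trans powr_ge_zero less_imp_le)
    also have "\<dots> = K0 * (M1 * (real k + 1) powr (b - \<theta>1 - 1) + M2 * (real k + 1) powr (b - \<theta>2 - 1))"
      by (simp add: algebra_simps flip: powr_add)
    also have "\<dots> \<le> K0 * (M1 * (pochhammer (b - \<theta>1) k / fact k / k0) + M2 * (pochhammer (b - \<theta>2) k / fact k / k0))"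
      using low[OF low1] low[OF low2] K0 M1 M2 unfolding k0_def
      by (intro mult_left_mono add_mono) auto
    also have "\<dots> = K0 / k0 * (M1 * (pochhammer (b - \<theta>1) k / fact k) + M2 * (pochhammer (b - \<theta>2) k / fact k))"
      by (simp add: divide_inverse algebra_simps)
    finally show "hypergeom_coeff (c - 1 + b) b c k
        \<le> K0 / k0 * (M1 * (pochhammer (b - \<theta>1) k / fact k) + M2 * (pochhammer (b - \<theta>2) k / fact k))" .
  qed (use K0 k0 in simp)
qed

lemma hypergeom_bound_by_binomial_series:
  fixes c0 b \<theta>1 \<theta>2 :: real
  assumes c0: "c0 > 0" and b: "b > 0" and cb: "c0 - 1 + b > 0" and \<theta>1: "\<theta>1 < b" and \<theta>2: "\<theta>2 < b"
  obtains K where "K > 0"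
    and "\<And>c t M1 M2. c \<ge> c0 \<Longrightarrow> 0 \<le> t \<Longrightarrow> t < 1 \<Longrightarrow> M1 \<ge> 0 \<Longrightarrow> M2 \<ge> 0 \<Longrightarrow>
       (\<And>k. ((c + real k) / c) powr (b - 1) \<le> M1 * (real k + 1) powr (- \<theta>1) + M2 * (real k + 1) powr (- \<theta>2)) \<Longrightarrow>
       1 \<le> hypergeom (c - 1 + b) b c t \<and>
       hypergeom (c - 1 + b) b c t \<le> K * (M1 * (1 - t) powr (\<theta>1 - b) + M2 * (1 - t) powr (\<theta>2 - b))"
proof -
  obtain K where K: "K > 0" and coeff: "\<And>c M1 M2 k. c \<ge> c0 \<Longrightarrow> M1 \<ge> 0 \<Longrightarrow> M2 \<ge> 0 \<Longrightarrow>
       ((c + real k) / c) powr (b - 1) \<le> M1 * (real k + 1) powr (- \<theta>1) + M2 * (real k + 1) powr (- \<theta>2) \<Longrightarrow>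
       hypergeom_coeff (c - 1 + b) b c k
         \<le> K * (M1 * (pochhammer (b - \<theta>1) k / fact k) + M2 * (pochhammer (b - \<theta>2) k / fact k))"
    using hypergeom_coeff_le_binomial_coeffs[OF c0 b cb \<theta>1 \<theta>2] by blast
  show ?thesis
  proof (rule that[OF K])
    fix c t M1 M2 :: real
    assume c: "c \<ge> c0" and t0: "0 \<le> t" and t1: "t < 1" and M1: "M1 \<ge> 0" and M2: "M2 \<ge> 0"
      and ratio: "\<And>k. ((c + real k) / c) powr (b - 1) \<le> M1 * (real k + 1) powr (- \<theta>1) + M2 * (real k + 1) powr (- \<theta>2)"
    define u where "u k = hypergeom_coeff (c - 1 + b) b c k * t ^ k" for k
    define v where "v k = K * M1 * (pochhammer (b - \<theta>1) k / fact k * t ^ k)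
      + K * M2 * (pochhammer (b - \<theta>2) k / fact k * t ^ k)" for k
    have u0: "u k \<ge> 0" for k
      unfolding u_def using c c0 cb b t0 by (intro mult_nonneg_nonneg hypergeom_coeff_nonneg) auto
    have uv: "u k \<le> v k" for k
      using mult_right_mono[OF coeff[OF c M1 M2 ratio] zero_le_power[OF t0]]
      unfolding u_def v_def by (simp add: algebra_simps)
    have v_sums: "v sums (K * M1 * (1 - t) powr (\<theta>1 - b) + K * M2 * (1 - t) powr (\<theta>2 - b))"
      unfolding v_def
      using binomial_series_pochhammer[OF t0 t1, of "b - \<theta>1"] binomial_series_pochhammer[OF t0 t1, of "b - \<theta>2"]
      by (intro sums_add sums_mult) simp_all
    have v_summable: "summable v" using v_sums by (rule sums_summable)
    have u_summable: "summable u"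
      by (rule summable_comparison_test'[OF v_summable, of 0]) (use u0 uv in simp)
    have "hypergeom (c - 1 + b) b c t = suminf u" unfolding hypergeom_eq_suminf u_def ..
    also have "\<dots> \<le> suminf v" by (rule suminf_le[OF uv u_summable v_summable])
    also have "\<dots> = K * (M1 * (1 - t) powr (\<theta>1 - b) + M2 * (1 - t) powr (\<theta>2 - b))"
      using v_sums by (simp add: sums_iff algebra_simps)
    finally show "1 \<le> hypergeom (c - 1 + b) b c t \<and>
       hypergeom (c - 1 + b) b c t \<le> K * (M1 * (1 - t) powr (\<theta>1 - b) + M2 * (1 - t) powr (\<theta>2 - b))"
      using u_summable c c0 cb b t0 unfolding u_def by (auto intro!: one_le_hypergeom)
  qed
qed

lemma powr_shift_ratio_le:
  fixes c b \<theta> :: real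
  assumes c: "c \<ge> 1" and \<theta>0: "0 \<le> \<theta>" and \<theta>1: "\<theta> \<le> 1 - b"
  shows "((c + real k) / c) powr (b - 1) \<le> c powr \<theta> * (real k + 1) powr (- \<theta>)"
proof -
  have cp: "c > 0" using c by simp
  have "((c + real k) / c) powr (b - 1) \<le> ((c + real k) / c) powr (- \<theta>)"
    using cp \<theta>1 by (intro powr_mono) auto
  also have "\<dots> = (c / (c + real k)) powr \<theta>"
    using cp by (simp add: powr_minus powr_divide)
  also have "\<dots> \<le> (c / (real k + 1)) powr \<theta>"
    using c cp \<theta>0 by (intro powr_mono2 divide_left_mono) auto
  also have "\<dots> = c powr \<theta> / (real k + 1) powr \<theta>"
    using cp by (simp add: powr_divide)
  also have "\<dots> = c powr \<theta> * (real k + 1) powr (- \<theta>)"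
    by (simp add: powr_minus divide_inverse)
  finally show ?thesis .
qed

lemma powr_shift_ratio_le_split:
  fixes c b :: real
  assumes cp: "c > 0" and b: "b \<ge> 1"
  shows "((c + real k) / c) powr (b - 1) \<le> 2 powr (b - 1) * (1 + c powr (1 - b) * (real k + 1) powr (b - 1))"
proof -
  define y where "y = (real k + 1) / c"
  have y0: "y > 0" unfolding y_def using cp by simp
  have "(c + real k) / c = 1 + real k / c" using cp by (simp add: field_simps)
  also have "\<dots> \<le> 1 + y" unfolding y_def using cp by (intro add_left_mono divide_right_mono) auto
  also have "\<dots> \<le> 2 * max 1 y" by (simp add: max_def)
  finally have "(c + real k) / c \<le> 2 * max 1 y" .
  then have "((c + real k) / c) powr (b - 1) \<le> (2 * max 1 y) powr (b - 1)"
    using cp b by (intro powr_mono2) auto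
  also have "\<dots> = 2 powr (b - 1) * (max 1 y) powr (b - 1)" using y0 by (subst powr_mult) auto
  also have "(max 1 y) powr (b - 1) \<le> 1 + y powr (b - 1)"
    using y0 b by (cases "y \<le> 1") (auto simp: max_def)
  also have "y powr (b - 1) = c powr (1 - b) * (real k + 1) powr (b - 1)"
  proof -
    have "y powr (b - 1) = (real k + 1) powr (b - 1) / c powr (b - 1)"
      unfolding y_def using cp by (simp add: powr_divide)
    moreover have "c powr (1 - b) = inverse (c powr (b - 1))" using powr_minus[of c "b - 1"] by simp
    ultimately show ?thesis by (simp add: divide_inverse mult.commute)
  qed
  finally show ?thesis by simp
qed

lemma hypergeom_le_powr:
  fixes c0 b \<theta> :: real
  assumes c0: "c0 \<ge> 1" and b: "b > 0" and \<theta>b: "\<theta> < b" and \<theta>0: "0 \<le> \<theta>" and \<theta>1: "\<theta> \<le> 1 - b"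
  obtains K where "K > 0" and "\<And>c t. c \<ge> c0 \<Longrightarrow> 0 \<le> t \<Longrightarrow> t < 1 \<Longrightarrow>
     1 \<le> hypergeom (c - 1 + b) b c t \<and> hypergeom (c - 1 + b) b c t \<le> K * c powr \<theta> * (1 - t) powr (\<theta> - b)"
proof -
  have "c0 > 0" and "c0 - 1 + b > 0" using c0 b by auto
  then obtain K where K: "K > 0" and bound: "\<And>c t M1 M2. c \<ge> c0 \<Longrightarrow> 0 \<le> t \<Longrightarrow> t < 1 \<Longrightarrow> M1 \<ge> 0 \<Longrightarrow> M2 \<ge> 0 \<Longrightarrow>
       (\<And>k. ((c + real k) / c) powr (b - 1) \<le> M1 * (real k + 1) powr (- \<theta>) + M2 * (real k + 1) powr (- \<theta>)) \<Longrightarrow>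
       1 \<le> hypergeom (c - 1 + b) b c t \<and>
       hypergeom (c - 1 + b) b c t \<le> K * (M1 * (1 - t) powr (\<theta> - b) + M2 * (1 - t) powr (\<theta> - b))"
    using hypergeom_bound_by_binomial_series[OF _ b _ \<theta>b \<theta>b] by metis
  show ?thesis
  proof (rule that[OF K])
    fix c t :: real assume c: "c \<ge> c0" and t: "0 \<le> t" "t < 1"
    have "((c + real k) / c) powr (b - 1) \<le> c powr \<theta> * (real k + 1) powr (- \<theta>) + 0 * (real k + 1) powr (- \<theta>)" for k
      using powr_shift_ratio_le[of c \<theta> b k] c c0 \<theta>0 \<theta>1 by simp
    from bound[OF c t _ order_refl this]
    show "1 \<le> hypergeom (c - 1 + b) b c t \<and> hypergeom (c - 1 + b) b c t \<le> K * c powr \<theta> * (1 - t) powr (\<theta> - b)"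
      by (simp add: mult.assoc)
  qed
qed

lemma hypergeom_le_large_b:
  fixes c0 b :: real
  assumes c0: "c0 \<ge> 1" and b: "b > 1/2"
  obtains K where "K > 0" and "\<And>c t. c \<ge> c0 \<Longrightarrow> 0 \<le> t \<Longrightarrow> t < 1 \<Longrightarrow>
     1 \<le> hypergeom (c - 1 + b) b c t \<and>
     hypergeom (c - 1 + b) b c t \<le> K * ((1 - t) powr (- b) + c powr (1 - b) * (1 - t) powr (1 - 2 * b))"
proof (cases "b < 1")
  case True
  obtain K where K: "K > 0" and bound: "\<And>c t. c \<ge> c0 \<Longrightarrow> 0 \<le> t \<Longrightarrow> t < 1 \<Longrightarrow>
     1 \<le> hypergeom (c - 1 + b) b c t \<and> hypergeom (c - 1 + b) b c t \<le> K * c powr (1 - b) * (1 - t) powr ((1 - b) - b)"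
    using hypergeom_le_powr[OF c0, of b "1 - b"] b True by auto
  show ?thesis
  proof (rule that[OF K])
    fix c t :: real assume "c \<ge> c0" "0 \<le> t" "t < 1"
    then show "1 \<le> hypergeom (c - 1 + b) b c t \<and>
        hypergeom (c - 1 + b) b c t \<le> K * ((1 - t) powr (- b) + c powr (1 - b) * (1 - t) powr (1 - 2 * b))"
      using bound[of c t] K by (smt (verit, best) mult.assoc mult_left_mono powr_ge_zero)
  qed
next
  case False
  have "c0 > 0" and "c0 - 1 + b > 0" and "0 < b" and "1 - b < b" using c0 b False by auto
  then obtain K where K: "K > 0" and bound: "\<And>c t M1 M2. c \<ge> c0 \<Longrightarrow> 0 \<le> t \<Longrightarrow> t < 1 \<Longrightarrow> M1 \<ge> 0 \<Longrightarrow> M2 \<ge> 0 \<Longrightarrow>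
       (\<And>k. ((c + real k) / c) powr (b - 1) \<le> M1 * (real k + 1) powr (- 0) + M2 * (real k + 1) powr (- (1 - b))) \<Longrightarrow>
       1 \<le> hypergeom (c - 1 + b) b c t \<and>
       hypergeom (c - 1 + b) b c t \<le> K * (M1 * (1 - t) powr (0 - b) + M2 * (1 - t) powr ((1 - b) - b))"
    using hypergeom_bound_by_binomial_series by blast
  show ?thesis
  proof (rule that[of "K * 2 powr (b - 1)"])
    fix c t :: real assume c: "c \<ge> c0" and t: "0 \<le> t" "t < 1"
    have "((c + real k) / c) powr (b - 1)
        \<le> 2 powr (b - 1) * (real k + 1) powr (- 0) + 2 powr (b - 1) * c powr (1 - b) * (real k + 1) powr (- (1 - b))" for k
      using powr_shift_ratio_le_split[of c b k] c c0 False by (simp add: algebra_simps)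
    from bound[OF c t _ _ this]
    have bound_c: "1 \<le> hypergeom (c - 1 + b) b c t \<and> hypergeom (c - 1 + b) b c t \<le> K * (2 powr (b - 1)
        * (1 - t) powr (0 - b) + 2 powr (b - 1) * c powr (1 - b) * (1 - t) powr ((1 - b) - b))"
      by simp
    have eq: "K * (2 powr (b - 1) * (1 - t) powr (0 - b) + 2 powr (b - 1) * c powr (1 - b) * (1 - t) powr ((1 - b) - b))
        = K * 2 powr (b - 1) * ((1 - t) powr (- b) + c powr (1 - b) * (1 - t) powr (1 - 2 * b))"
      by (simp add: distrib_left mult_ac)
    show "1 \<le> hypergeom (c - 1 + b) b c t \<and>
        hypergeom (c - 1 + b) b c t \<le> K * 2 powr (b - 1) * ((1 - t) powr (- b) + c powr (1 - b) * (1 - t) powr (1 - 2 * b))"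
      using bound_c unfolding eq .
  qed (use K in simp)
qed

lemma hypergeom_bounded_small_b:
  fixes c b :: real
  assumes c: "c \<ge> 1" and b: "b > 0" and b2: "2 * b < 1"
  obtains K where "K > 0"
    and "\<And>t. 0 \<le> t \<Longrightarrow> t < 1 \<Longrightarrow> 1 \<le> hypergeom (c - 1 + b) b c t \<and> hypergeom (c - 1 + b) b c t \<le> K"
proof -
  have "c > 0" and "c - 1 + b > 0" using c b by auto
  then obtain K0 where K0: "K0 > 0" and coeff: "\<And>c' k. c' \<ge> c \<Longrightarrow>
      hypergeom_coeff (c' - 1 + b) b c' k \<le> K0 * (((c' + real k) / c') powr (b - 1) * (real k + 1) powr (b - 1))"
    using hypergeom_coeff_le_powr[OF _ b] by blast
  define w where "w k = K0 * c powr (1 - b) * (real k + 1) powr (2 * b - 2)" for k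
  have w_pos: "w k > 0" for k unfolding w_def using K0 c by simp
  have "summable (\<lambda>k. real k powr (2 * b - 2))" using b2 by (subst summable_real_powr_iff) simp
  then have "summable (\<lambda>k. real (Suc k) powr (2 * b - 2))" by (subst summable_Suc_iff)
  then have w_summable: "summable w" unfolding w_def by (intro summable_mult) (simp add: add.commute)
  have coeff_le: "hypergeom_coeff (c - 1 + b) b c k \<le> w k" for k
  proof -
    have "((c + real k) / c) powr (b - 1) \<le> c powr (1 - b) * (real k + 1) powr (- (1 - b))"
      by (rule powr_shift_ratio_le[OF c]) (use b2 in auto)
    then have "((c + real k) / c) powr (b - 1) * (real k + 1) powr (b - 1)
        \<le> c powr (1 - b) * (real k + 1) powr (- (1 - b)) * (real k + 1) powr (b - 1)"
      by (rule mult_right_mono) simp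
    also have "\<dots> = c powr (1 - b) * (real k + 1) powr (- (1 - b) + (b - 1))"
      by (simp only: powr_add mult.assoc)
    also have "- (1 - b) + (b - 1) = 2 * b - 2" by simp
    finally have "((c + real k) / c) powr (b - 1) * (real k + 1) powr (b - 1) \<le> c powr (1 - b) * (real k + 1) powr (2 * b - 2)" .
    then show ?thesis
      using coeff[OF order_refl, of k] K0 unfolding w_def by (smt (verit) mult.assoc mult_left_mono)
  qed
  show ?thesis
  proof (rule that[of "suminf w"])
    show "suminf w > 0" using w_summable w_pos by (rule suminf_pos)
    fix t :: real assume t0: "0 \<le> t" and t1: "t < 1"
    define u where "u k = hypergeom_coeff (c - 1 + b) b c k * t ^ k" for k
    have u_le: "u k \<le> w k" for k
    proof -
      have "0 \<le> hypergeom_coeff (c - 1 + b) b c k" using c b by (intro hypergeom_coeff_nonneg) auto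
      then have "u k \<le> hypergeom_coeff (c - 1 + b) b c k"
        unfolding u_def using t0 t1 by (intro mult_left_le) (auto intro: power_le_one)
      then show ?thesis using coeff_le[of k] by (rule order_trans)
    qed
    have "u k \<ge> 0" for k unfolding u_def using c b t0 by (auto intro!: mult_nonneg_nonneg hypergeom_coeff_nonneg)
    then have u_summable: "summable u"
      by (intro summable_comparison_test'[OF w_summable, of 0]) (simp add: u_le)
    have "hypergeom (c - 1 + b) b c t = suminf u" unfolding hypergeom_eq_suminf u_def ..
    also have "\<dots> \<le> suminf w" by (rule suminf_le[OF u_le u_summable w_summable])
    finally show "1 \<le> hypergeom (c - 1 + b) b c t \<and> hypergeom (c - 1 + b) b c t \<le> suminf w"
      using u_summable c b t0 unfolding u_def by (auto intro!: one_le_hypergeom)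
  qed
qed

lemma hypergeom_fixed_c_le_large_b:
  fixes c b :: real
  assumes c: "c \<ge> 1" and b: "b > 1/2"
  obtains K where "K > 0" and "\<And>t. 0 \<le> t \<Longrightarrow> t < 1 \<Longrightarrow>
    1 \<le> hypergeom (c - 1 + b) b c t \<and> hypergeom (c - 1 + b) b c t \<le> K * (1 - t) powr (1 - 2 * b)"
proof (cases "b < 1")
  case True
  obtain K where K: "K > 0" and bound: "\<And>c' t. c' \<ge> c \<Longrightarrow> 0 \<le> t \<Longrightarrow> t < 1 \<Longrightarrow>
     1 \<le> hypergeom (c' - 1 + b) b c' t \<and> hypergeom (c' - 1 + b) b c' t \<le> K * c' powr (1 - b) * (1 - t) powr ((1 - b) - b)"
    using hypergeom_le_powr[OF c, of b "1 - b"] b True by auto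
  show ?thesis
    by (rule that[of "K * c powr (1 - b)"]) (use K c bound[OF order_refl] in auto)
next
  case False
  obtain K where K: "K > 0" and bound: "\<And>c' t. c' \<ge> c \<Longrightarrow> 0 \<le> t \<Longrightarrow> t < 1 \<Longrightarrow>
     1 \<le> hypergeom (c' - 1 + b) b c' t \<and>
     hypergeom (c' - 1 + b) b c' t \<le> K * ((1 - t) powr (- b) + c' powr (1 - b) * (1 - t) powr (1 - 2 * b))"
    using hypergeom_le_large_b[OF c b] by blast
  show ?thesis
  proof (rule that[of "K * (1 + c powr (1 - b))"])
    fix t :: real assume t: "0 \<le> t" "t < 1"
    have "(1 - t) powr (- b) \<le> (1 - t) powr (1 - 2 * b)" using False t by (intro powr_mono') auto
    then have "K * ((1 - t) powr (- b) + c powr (1 - b) * (1 - t) powr (1 - 2 * b))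
        \<le> K * (1 + c powr (1 - b)) * (1 - t) powr (1 - 2 * b)"
      using K by (simp add: algebra_simps)
    then show "1 \<le> hypergeom (c - 1 + b) b c t \<and>
        hypergeom (c - 1 + b) b c t \<le> K * (1 + c powr (1 - b)) * (1 - t) powr (1 - 2 * b)"
      using bound[OF order_refl t] by linarith
  qed (use K in \<open>simp add: add_pos_nonneg\<close>)
qed

section \<open>Euler's integral and nonpositive \<open>b\<close>\<close>

lemma abs_pochhammer_le: "\<bar>pochhammer (b::real) k\<bar> \<le> pochhammer \<bar>b\<bar> k"
proof (induction k)
  case (Suc k)
  have "\<bar>pochhammer b (Suc k)\<bar> = \<bar>pochhammer b k\<bar> * \<bar>b + real k\<bar>"
    by (simp add: pochhammer_Suc abs_mult)
  also have "\<dots> \<le> pochhammer \<bar>b\<bar> k * (\<bar>b\<bar> + real k)"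
    by (rule mult_mono[OF Suc.IH]) (simp_all add: pochhammer_nonneg_real)
  also have "\<dots> = pochhammer \<bar>b\<bar> (Suc k)" by (simp add: pochhammer_Suc)
  finally show ?case .
qed simp

lemma has_integral_Beta_moment:
  fixes a v :: real
  assumes a: "a > 0" and v: "v > 0"
  shows "((\<lambda>x. x powr (a - 1) * (1 - x) powr (v - 1) * x ^ k) has_integral Beta (a + real k) v) {0..1}"
proof -
  have "((\<lambda>x. x powr (a + real k - 1) * (1 - x) powr (v - 1)) has_integral Beta (a + real k) v) {0..1}"
    by (rule has_integral_Beta_real) (use a v in auto)
  moreover have "x powr (a + real k - 1) = x powr (a - 1) * x ^ k" if "x \<in> {0..1}" "x \<noteq> 0" for x
    using that by (simp add: powr_add [symmetric] powr_realpow [symmetric] algebra_simps)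
  then have "x powr (a + real k - 1) * (1 - x) powr (v - 1) = x powr (a - 1) * (1 - x) powr (v - 1) * x ^ k"
    if "x \<in> {0..1}" for x
    using that by (cases "x = 0") auto
  ultimately show ?thesis by (subst (asm) has_integral_cong) auto
qed

lemma Beta_plus_nat_eq:
  fixes a v :: real
  assumes a: "a > 0" and v: "v > 0"
  shows "Beta (a + real k) v = Beta a v * (pochhammer a k / pochhammer (a + v) k)"
proof -
  have "Gamma a > 0" "Gamma v > 0" "Gamma (a + v) > 0" "Gamma (a + real k) > 0" "Gamma (a + v + real k) > 0"
    using a v by auto
  moreover have "pochhammer a k = Gamma (a + real k) / Gamma a"
    and "pochhammer (a + v) k = Gamma (a + v + real k) / Gamma (a + v)"
    using a v by (simp_all add: pochhammer_Gamma_pos)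
  ultimately show ?thesis unfolding Beta_def by (simp add: field_simps)
qed

lemma has_integral_Euler_partial_sum:
  fixes a v b t :: real
  assumes a: "a > 0" and v: "v > 0"
  shows "((\<lambda>x. x powr (a - 1) * (1 - x) powr (v - 1) * (\<Sum>k<N. pochhammer b k / fact k * (t * x) ^ k))
           has_integral Beta a v * (\<Sum>k<N. hypergeom_coeff a b (a + v) k * t ^ k)) {0..1}"
proof -
  define W where "W x = x powr (a - 1) * (1 - x) powr (v - 1)" for x :: real
  have "((\<lambda>x. \<Sum>k<N. (pochhammer b k / fact k * t ^ k) * (W x * x ^ k)) has_integral
      (\<Sum>k<N. (pochhammer b k / fact k * t ^ k) * Beta (a + real k) v)) {0..1}"
    unfolding W_def by (intro has_integral_sum has_integral_mult_right has_integral_Beta_moment a v) simp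
  moreover have "(\<lambda>x. \<Sum>k<N. (pochhammer b k / fact k * t ^ k) * (W x * x ^ k))
      = (\<lambda>x. W x * (\<Sum>k<N. pochhammer b k / fact k * (t * x) ^ k))"
    by (simp add: fun_eq_iff sum_distrib_left power_mult_distrib mult_ac)
  moreover have "(\<Sum>k<N. (pochhammer b k / fact k * t ^ k) * Beta (a + real k) v)
      = Beta a v * (\<Sum>k<N. hypergeom_coeff a b (a + v) k * t ^ k)"
    unfolding sum_distrib_left
    by (intro sum.cong refl) (simp add: Beta_plus_nat_eq[OF a v] hypergeom_coeff_def field_simps)
  ultimately show ?thesis unfolding W_def by simp
qed

lemma binomial_partial_sum_bound:
  fixes b t y :: real
  assumes y: "0 \<le> y" "y \<le> t" and t: "t < 1"
  shows "\<bar>\<Sum>k<N. pochhammer b k / fact k * y ^ k\<bar> \<le> (1 - t) powr (- \<bar>b\<bar>)"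
proof -
  have t0: "0 \<le> t" using y by simp
  have "\<bar>\<Sum>k<N. pochhammer b k / fact k * y ^ k\<bar> \<le> (\<Sum>k<N. pochhammer \<bar>b\<bar> k / fact k * t ^ k)"
  proof (rule order_trans[OF sum_abs sum_mono])
    fix k
    have "\<bar>pochhammer b k / fact k * y ^ k\<bar> = \<bar>pochhammer b k\<bar> / fact k * y ^ k"
      using y by (simp add: abs_mult)
    also have "\<dots> \<le> pochhammer \<bar>b\<bar> k / fact k * t ^ k"
      using y abs_pochhammer_le[of b k]
      by (intro mult_mono divide_right_mono power_mono) (auto simp: pochhammer_nonneg_real)
    finally show "\<bar>pochhammer b k / fact k * y ^ k\<bar> \<le> pochhammer \<bar>b\<bar> k / fact k * t ^ k" .
  qed
  also have "\<dots> \<le> (\<Sum>k. pochhammer \<bar>b\<bar> k / fact k * t ^ k)"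
    using binomial_series_pochhammer[OF t0 t, of "\<bar>b\<bar>"] t0
    by (intro sum_le_suminf) (auto dest: sums_summable simp: pochhammer_nonneg_real)
  also have "\<dots> = (1 - t) powr (- \<bar>b\<bar>)"
    using binomial_series_pochhammer[OF t0 t] by (simp add: sums_iff)
  finally show ?thesis .
qed

lemma hypergeom_Euler_integral:
  fixes a v b t :: real
  assumes a: "a > 0" and v: "v > 0" and t0: "0 \<le> t" and t1: "t < 1"
  shows "((\<lambda>x. x powr (a - 1) * (1 - x) powr (v - 1) * (1 - t * x) powr (- b))
           has_integral Beta a v * hypergeom a b (a + v) t) {0..1}"
proof -
  \<comment> \<open>Integrate the binomial series of \<open>(1 - t x) powr (- b)\<close> termwise, by dominated convergence.\<close>
  define W where "W x = x powr (a - 1) * (1 - x) powr (v - 1)" for x :: real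
  define f where "f N x = W x * (\<Sum>k<N. pochhammer b k / fact k * (t * x) ^ k)" for N x
  define S where "S N = (\<Sum>k<N. hypergeom_coeff a b (a + v) k * t ^ k)" for N
  have W_int: "(W has_integral Beta a v) {0..1}" unfolding W_def by (rule has_integral_Beta_real[OF a v])
  have f_int: "(f N has_integral (Beta a v * S N)) {0..1}" for N
    unfolding f_def W_def S_def by (rule has_integral_Euler_partial_sum[OF a v])
  have dominated: "norm (f N x) \<le> W x * (1 - t) powr (- \<bar>b\<bar>)" if "x \<in> {0..1}" for N x
  proof -
    have "t * x \<le> t" using that t0 by (simp add: mult_left_le)
    then have "\<bar>\<Sum>k<N. pochhammer b k / fact k * (t * x) ^ k\<bar> \<le> (1 - t) powr (- \<bar>b\<bar>)"
      using that t0 t1 by (intro binomial_partial_sum_bound) auto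
    then show ?thesis unfolding f_def W_def by (simp add: abs_mult mult_left_mono)
  qed
  have pointwise: "(\<lambda>N. f N x) \<longlonglongrightarrow> W x * (1 - t * x) powr (- b)" if "x \<in> {0..1}" for x
  proof -
    have "t * x \<le> t" using that t0 by (simp add: mult_left_le)
    then have "(\<lambda>k. pochhammer b k / fact k * (t * x) ^ k) sums ((1 - t * x) powr (- b))"
      using that t0 t1 by (intro binomial_series_pochhammer) auto
    then show ?thesis unfolding f_def sums_def by (intro tendsto_mult_left)
  qed
  have W_bound_int: "((\<lambda>x. W x * (1 - t) powr (- \<bar>b\<bar>)) has_integral Beta a v * (1 - t) powr (- \<bar>b\<bar>)) {0..1}"
    by (rule has_integral_mult_left[OF W_int])
  define g where "g x = W x * (1 - t * x) powr (- b)" for x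
  have DC: "g integrable_on {0..1}" "(\<lambda>N. integral {0..1} (f N)) \<longlonglongrightarrow> integral {0..1} g"
    using dominated_convergence[of f "{0..1}" "\<lambda>x. W x * (1 - t) powr (- \<bar>b\<bar>)" g]
      f_int W_bound_int dominated pointwise unfolding g_def by (auto simp: has_integral_integrable)
  define I where "I = integral {0..1} g"
  have I: "(g has_integral I) {0..1}" and lim: "(\<lambda>N. integral {0..1} (f N)) \<longlonglongrightarrow> I"
    using DC unfolding I_def by (auto simp: has_integral_integral)
  have "(\<lambda>N. integral {0..1} (f N)) = (\<lambda>N. Beta a v * S N)" using f_int by (auto intro: integral_unique)
  with lim have "(\<lambda>N. Beta a v * S N) \<longlonglongrightarrow> I" by simp
  moreover have "Beta a v > 0" using a v by (simp add: Beta_def)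
  ultimately have "(\<lambda>N. Beta a v * S N / Beta a v) \<longlonglongrightarrow> I / Beta a v"
    by (intro tendsto_divide tendsto_const) auto
  then have "S \<longlonglongrightarrow> I / Beta a v" using \<open>Beta a v > 0\<close> by simp
  then have "(\<lambda>k. hypergeom_coeff a b (a + v) k * t ^ k) sums (I / Beta a v)"
    unfolding sums_def S_def .
  then have "hypergeom a b (a + v) t = I / Beta a v"
    unfolding hypergeom_eq_suminf by (simp add: sums_iff)
  then show ?thesis using I \<open>Beta a v > 0\<close> unfolding g_def W_def by simp
qed

lemma one_minus_mult_powr_le:
  fixes t x m :: real
  assumes t: "0 \<le> t" "t < 1" and x: "0 \<le> x" "x \<le> 1" and m: "m \<ge> 0"
  shows "(1 - t * x) powr m \<le> 2 powr m * ((1 - t) powr m + (1 - x) powr m)"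
proof -
  have "1 - t * x \<le> 2 * max (1 - t) (1 - x)"
    using x t mult_nonneg_nonneg[of "1 - t" "1 - x"] by (auto simp: algebra_simps max_def)
  moreover have "0 \<le> 1 - t * x" using t x mult_le_one[of t x] by simp
  ultimately have "(1 - t * x) powr m \<le> (2 * max (1 - t) (1 - x)) powr m"
    using m by (intro powr_mono2) auto
  also have "\<dots> = 2 powr m * max (1 - t) (1 - x) powr m"
    using t x by (subst powr_mult) auto
  also have "\<dots> \<le> 2 powr m * ((1 - t) powr m + (1 - x) powr m)"
    by (intro mult_left_mono) (auto simp: max_def)
  finally show ?thesis .
qed

lemma hypergeom_nonpos_b_between:
  fixes c b t :: real
  assumes cb: "c - 1 + b > 0" and b: "b \<le> 0" and t0: "0 \<le> t" and t1: "t < 1"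
  shows "(1 - t) powr (- b) \<le> hypergeom (c - 1 + b) b c t" and "hypergeom (c - 1 + b) b c t \<le> 1"
proof -
  \<comment> \<open>In Euler's integral the factor \<open>(1 - t x) powr (- b)\<close> lies between \<open>(1 - t) powr (- b)\<close> and \<open>1\<close>.\<close>
  define a where "a = c - 1 + b"
  define W where "W x = x powr (a - 1) * (1 - x) powr ((1 - b) - 1)" for x :: real
  have a: "a > 0" and v: "1 - b > 0" using cb b unfolding a_def by auto
  have B: "Beta a (1 - b) > 0" using a v by (simp add: Beta_def)
  have F_int: "((\<lambda>x. W x * (1 - t * x) powr (- b)) has_integral Beta a (1 - b) * hypergeom a b c t) {0..1}"
    using hypergeom_Euler_integral[OF a v t0 t1, of b] unfolding W_def a_def by simp
  have W_int: "(W has_integral Beta a (1 - b)) {0..1}" unfolding W_def by (rule has_integral_Beta_real[OF a v])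
  have W0: "W x \<ge> 0" for x unfolding W_def by simp
  have tx: "1 - t \<le> 1 - t * x" "1 - t * x \<le> 1" "0 < 1 - t * x" if "x \<in> {0..1}" for x
    using that t0 t1 mult_left_le[of x t] by auto
  have "Beta a (1 - b) * (1 - t) powr (- b) \<le> Beta a (1 - b) * hypergeom a b c t"
    using has_integral_mult_left[OF W_int] F_int
    by (rule has_integral_le) (use tx b t1 in \<open>auto intro!: mult_left_mono W0 powr_mono2\<close>)
  then show "(1 - t) powr (- b) \<le> hypergeom (c - 1 + b) b c t"
    using B unfolding a_def by simp
  have "Beta a (1 - b) * hypergeom a b c t \<le> Beta a (1 - b)"
  proof (rule has_integral_le[OF F_int W_int])
    fix x :: real assume "x \<in> {0..1}"
    then have "(1 - t * x) powr (- b) \<le> 1" using tx[OF \<open>x \<in> {0..1}\<close>] b powr_mono2[of "- b" "1 - t * x" 1] by simp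
    then show "W x * (1 - t * x) powr (- b) \<le> W x" using W0[of x] by (simp add: mult_left_le)
  qed
  then show "hypergeom (c - 1 + b) b c t \<le> 1" using B unfolding a_def by simp
qed

lemma hypergeom_nonpos_b_le_Beta_ratio:
  fixes c b t :: real
  assumes cb: "c - 1 + b > 0" and b: "b \<le> 0" and t0: "0 \<le> t" and t1: "t < 1"
  shows "hypergeom (c - 1 + b) b c t
           \<le> 2 powr (- b) * ((1 - t) powr (- b) + Beta (c - 1 + b) (1 - 2 * b) / Beta (c - 1 + b) (1 - b))"
proof -
  define a where "a = c - 1 + b"
  define W where "W x = x powr (a - 1) * (1 - x) powr ((1 - b) - 1)" for x :: real
  have a: "a > 0" and v: "1 - b > 0" using cb b unfolding a_def by auto
  have B: "Beta a (1 - b) > 0" using a v by (simp add: Beta_def)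
  have F_int: "((\<lambda>x. W x * (1 - t * x) powr (- b)) has_integral Beta a (1 - b) * hypergeom a b c t) {0..1}"
    using hypergeom_Euler_integral[OF a v t0 t1, of b] unfolding W_def a_def by simp
  have W_int: "(W has_integral Beta a (1 - b)) {0..1}" unfolding W_def by (rule has_integral_Beta_real[OF a v])
  have Wm_int: "((\<lambda>x. W x * (1 - x) powr (- b)) has_integral Beta a (1 - 2 * b)) {0..1}"
  proof -
    have "((\<lambda>x. x powr (a - 1) * (1 - x) powr ((1 - 2 * b) - 1)) has_integral Beta a (1 - 2 * b)) {0..1}"
      by (rule has_integral_Beta_real) (use a b in auto)
    moreover have "x powr (a - 1) * (1 - x) powr ((1 - 2 * b) - 1) = W x * (1 - x) powr (- b)"
      if "x \<in> {0..1}" for x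
      using that unfolding W_def by (cases "x = 1") (auto simp: mult_ac simp flip: powr_add)
    ultimately show ?thesis by (subst (asm) has_integral_cong) auto
  qed
  have "Beta a (1 - b) * hypergeom a b c t
      \<le> 2 powr (- b) * (Beta a (1 - b) * (1 - t) powr (- b) + Beta a (1 - 2 * b))"
  proof (rule has_integral_le[OF F_int])
    show "((\<lambda>x. 2 powr (- b) * (W x * (1 - t) powr (- b) + W x * (1 - x) powr (- b))) has_integral
        2 powr (- b) * (Beta a (1 - b) * (1 - t) powr (- b) + Beta a (1 - 2 * b))) {0..1}"
      by (intro has_integral_mult_right has_integral_add has_integral_mult_left W_int Wm_int)
    fix x :: real assume "x \<in> {0..1}"
    then have "W x * (1 - t * x) powr (- b) \<le> W x * (2 powr (- b) * ((1 - t) powr (- b) + (1 - x) powr (- b)))"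
      using one_minus_mult_powr_le[OF t0 t1, of x "- b"] b unfolding W_def by (intro mult_left_mono) auto
    then show "W x * (1 - t * x) powr (- b) \<le> 2 powr (- b) * (W x * (1 - t) powr (- b) + W x * (1 - x) powr (- b))"
      by (simp add: algebra_simps)
  qed
  then show ?thesis using B unfolding a_def[symmetric] by (simp add: field_simps)
qed

lemma hypergeom_le_nonpos_b:
  fixes c0 b :: real
  assumes c0: "c0 > 0" and b: "b \<le> 0" and cb: "c0 - 1 + b > 0"
  obtains K where "K > 0"
    and "\<And>c t. c \<ge> c0 \<Longrightarrow> 0 \<le> t \<Longrightarrow> t < 1 \<Longrightarrow> hypergeom (c - 1 + b) b c t \<le> K * ((1 - t) powr (- b) + c powr b)"
proof -
  have "c0 + - b > 0" using c0 b by simp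
  then obtain K1 where K1: "K1 > 0" and ratio: "\<And>z. z \<ge> c0 \<Longrightarrow> Gamma z / Gamma (z + - b) \<le> K1 * z powr (- (- b))"
    using Gamma_ratio_inverse_bound[OF c0] by blast
  define C where "C = Gamma (1 - 2 * b) / Gamma (1 - b)"
  have C: "C > 0" unfolding C_def using b by simp
  show ?thesis
  proof (rule that[of "2 powr (- b) * max 1 (C * K1)"])
    fix c t :: real assume c: "c \<ge> c0" and t: "0 \<le> t" "t < 1"
    have a: "c - 1 + b > 0" and cp: "c > 0" using c cb c0 by auto
    have "Gamma (c - 1 + b) > 0" "Gamma (1 - b) > 0" "Gamma c > 0" "Gamma (c + - b) > 0"
      using a b cp by auto
    then have "Beta (c - 1 + b) (1 - 2 * b) / Beta (c - 1 + b) (1 - b) = C * (Gamma c / Gamma (c + - b))"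
      unfolding Beta_def C_def by (simp add: field_simps)
    also have "\<dots> \<le> C * (K1 * c powr b)" using ratio[OF c] C by (intro mult_left_mono) auto
    finally have "hypergeom (c - 1 + b) b c t \<le> 2 powr (- b) * ((1 - t) powr (- b) + C * K1 * c powr b)"
      using hypergeom_nonpos_b_le_Beta_ratio[OF a b t] by (smt (verit) mult.assoc mult_left_mono powr_ge_zero)
    also have "\<dots> \<le> 2 powr (- b) * (max 1 (C * K1) * ((1 - t) powr (- b) + c powr b))"
    proof (rule mult_left_mono)
      have "(1 - t) powr (- b) \<le> max 1 (C * K1) * (1 - t) powr (- b)" by (simp add: mult_le_cancel_right1)
      moreover have "C * K1 * c powr b \<le> max 1 (C * K1) * c powr b" by (intro mult_right_mono) auto
      ultimately show "(1 - t) powr (- b) + C * K1 * c powr b \<le> max 1 (C * K1) * ((1 - t) powr (- b) + c powr b)"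
        by (simp add: distrib_left)
    qed simp
    finally show "hypergeom (c - 1 + b) b c t \<le> 2 powr (- b) * max 1 (C * K1) * ((1 - t) powr (- b) + c powr b)"
      by (simp add: mult.assoc)
  qed simp
qed

section \<open>Asymptotics of the coefficients\<close>

lemma Beta_le_powr:
  fixes x0 p :: real
  assumes x0: "x0 > 0" and p: "p > 0"
  obtains K where "K > 0" and "\<And>x. x \<ge> x0 \<Longrightarrow> Beta x p \<le> K * x powr (- p)"
proof -
  have "x0 + p > 0" using x0 p by simp
  then obtain K where K: "K > 0" and ratio: "\<And>x. x \<ge> x0 \<Longrightarrow> Gamma x / Gamma (x + p) \<le> K * x powr (- p)"
    using Gamma_ratio_inverse_bound[OF x0] by blast
  show ?thesis
  proof (rule that[of "Gamma p * K"])
    fix x assume "x \<ge> x0"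
    then have "Gamma p * (Gamma x / Gamma (x + p)) \<le> Gamma p * (K * x powr (- p))"
      using ratio p by (intro mult_left_mono) auto
    then show "Beta x p \<le> Gamma p * K * x powr (- p)" unfolding Beta_def by (simp add: mult_ac)
  qed (use K p in simp)
qed

lemma abs_integral_le_of_dominated:
  fixes f g :: "real \<Rightarrow> real"
  assumes g: "(g has_integral I) S" and le: "\<And>x. x \<in> S \<Longrightarrow> \<bar>f x\<bar> \<le> g x"
  shows "\<bar>integral S f\<bar> \<le> I"
proof (cases "f integrable_on S")
  case True
  have "norm (integral S f) \<le> integral S g"
    using True g le by (intro integral_norm_bound_integral) (auto simp: has_integral_integrable)
  then show ?thesis using g by (simp add: integral_unique)
next
  case False
  have "0 \<le> I" by (rule has_integral_nonneg[OF g]) (meson le abs_ge_zero order_trans)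
  then show ?thesis using False by (simp add: not_integrable_integral)
qed

definition admissible :: "nat \<Rightarrow> real \<Rightarrow> real \<Rightarrow> bool" where
  "admissible n \<alpha> \<beta> \<longleftrightarrow> n \<ge> 3 \<and> \<beta> \<ge> 0 \<and> 0 < \<alpha> + \<beta> \<and> \<alpha> + \<beta> < real n - \<beta>
     \<and> (real n - \<alpha> - 2 * \<beta>) / (2 * real n) + (real n - \<alpha>) / (2 * (real n - 1)) < 1"

lemma admissible_consequences:
  assumes "admissible n \<alpha> \<beta>"
  shows "qexp n \<alpha> \<beta> > 2" and "qexp n \<alpha> \<beta> * (\<alpha> + \<beta> - 1) > -1"
    and "2 - real n < \<alpha>" and "\<alpha> < real n"
proof -
  define N where "N = real n"
  have N: "N \<ge> 3" and \<beta>: "\<beta> \<ge> 0" and \<alpha>\<beta>: "0 < \<alpha> + \<beta>" and D: "N - \<alpha> - 2 * \<beta> > 0"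
    and h: "(N - \<alpha> - 2 * \<beta>) / (2 * N) + (N - \<alpha>) / (2 * (N - 1)) < 1"
    using assms unfolding admissible_def N_def by auto
  have q: "qexp n \<alpha> \<beta> = 2 * N / (N - \<alpha> - 2 * \<beta>)" unfolding qexp_def N_def by simp
  have "((N - \<alpha> - 2 * \<beta>) / (2 * N) + (N - \<alpha>) / (2 * (N - 1))) * (2 * N * (N - 1)) < 1 * (2 * N * (N - 1))"
    by (rule mult_strict_right_mono[OF h]) (use N in simp)
  also have "((N - \<alpha> - 2 * \<beta>) / (2 * N) + (N - \<alpha>) / (2 * (N - 1))) * (2 * N * (N - 1))
      = (N - 1) * (N - \<alpha> - 2 * \<beta>) + N * (N - \<alpha>)"
    using N by (simp add: field_simps)
  finally have key: "(2 * N - 1) * \<alpha> + 2 * (N - 1) * \<beta> > N"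
    by (simp add: algebra_simps)
  show "qexp n \<alpha> \<beta> > 2" unfolding q using D \<beta> \<alpha>\<beta> by (simp add: field_simps)
  show "qexp n \<alpha> \<beta> * (\<alpha> + \<beta> - 1) > -1" unfolding q using D key by (simp add: field_simps)
  have "(N - \<alpha>) / (2 * (N - 1)) < 1" using h D N by (smt (verit) divide_pos_pos)
  then show "2 - real n < \<alpha>" using N unfolding N_def by (simp add: field_simps)
  show "\<alpha> < real n" using assms unfolding admissible_def by simp
qed

definition d_ab_const :: "nat \<Rightarrow> real \<Rightarrow> real" where
  "d_ab_const n \<beta> = pi powr (real n / 2) * 2 powr (1 - \<beta>) / Gamma (real n / 2)"

lemma d_ab_const_pos: "n \<ge> 1 \<Longrightarrow> d_ab_const n \<beta> > 0"
  unfolding d_ab_const_def by (intro divide_pos_pos mult_pos_pos) auto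

lemma d_ab_sqrt:
  assumes "t \<ge> 0"
  shows "d_ab n \<alpha> \<beta> (sqrt t) = d_ab_const n \<beta> * (1 - t) powr (\<alpha> + \<beta> - 1)
      * hypergeom (real n / 2 - 1 + \<alpha> / 2) (\<alpha> / 2) (real n / 2) t"
proof -
  have arg: "(real n + \<alpha>) / 2 - 1 = real n / 2 - 1 + \<alpha> / 2" by (simp add: field_simps)
  show ?thesis using assms unfolding d_ab_def d_ab_const_def arg by simp
qed

definition A_integrand :: "nat \<Rightarrow> real \<Rightarrow> real \<Rightarrow> nat \<Rightarrow> real \<Rightarrow> real" where
  "A_integrand n \<alpha> \<beta> l t =
     d_ab n \<alpha> \<beta> (sqrt t) powr (qexp n \<alpha> \<beta> - 2)
     * (1 - t) powr (2 * (\<beta> + \<alpha> - 1))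
     * t powr (real n / 2 + real l - 1)
     * (hypergeom (real l + (real n + \<alpha>) / 2 - 1) (\<alpha> / 2) (real l + real n / 2) t) ^ 2"

lemma A_coeff_eq_integral:
  "A_coeff n \<alpha> \<beta> l = Gamma (real l + (real n - \<alpha>) / 2) ^ 2 / Gamma (real l + real n / 2) ^ 2
     * integral {0..1} (A_integrand n \<alpha> \<beta> l)"
  unfolding A_coeff_def A_integrand_def ..

lemma A_integrand_eq:
  assumes "t \<ge> 0"
  shows "A_integrand n \<alpha> \<beta> l t =
    (d_ab_const n \<beta> * (1 - t) powr (\<alpha> + \<beta> - 1) * hypergeom (real n / 2 - 1 + \<alpha> / 2) (\<alpha> / 2) (real n / 2) t)
      powr (qexp n \<alpha> \<beta> - 2)
    * (1 - t) powr (2 * (\<alpha> + \<beta> - 1)) * t powr (real n / 2 + real l - 1)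
    * (hypergeom ((real l + real n / 2) - 1 + \<alpha> / 2) (\<alpha> / 2) (real l + real n / 2) t)\<^sup>2"
proof -
  have "real l + (real n + \<alpha>) / 2 - 1 = (real l + real n / 2) - 1 + \<alpha> / 2" by (simp add: field_simps)
  moreover have "2 * (\<beta> + \<alpha> - 1) = 2 * (\<alpha> + \<beta> - 1)" by simp
  ultimately show ?thesis unfolding A_integrand_def d_ab_sqrt[OF assms] by metis
qed

lemma square_le_of_abs_le_powr_sum:
  fixes F K c s \<theta> \<sigma> \<theta>' \<sigma>' :: real
  assumes "\<bar>F\<bar> \<le> K * (c powr \<theta> * s powr \<sigma> + c powr \<theta>' * s powr \<sigma>')"
  shows "F\<^sup>2 \<le> 2 * K\<^sup>2 * (c powr (2 * \<theta>) * s powr (2 * \<sigma>) + c powr (2 * \<theta>') * s powr (2 * \<sigma>'))"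
proof -
  have "F\<^sup>2 \<le> (K * (c powr \<theta> * s powr \<sigma> + c powr \<theta>' * s powr \<sigma>'))\<^sup>2"
    using assms by (metis abs_ge_zero order_trans power2_abs power_mono)
  also have "\<dots> \<le> K\<^sup>2 * (2 * ((c powr \<theta> * s powr \<sigma>)\<^sup>2 + (c powr \<theta>' * s powr \<sigma>')\<^sup>2))"
    unfolding power_mult_distrib[of K]
    using sum_squares_bound[of "c powr \<theta> * s powr \<sigma>" "c powr \<theta>' * s powr \<sigma>'"]
    by (intro mult_left_mono) (auto simp: power2_sum)
  also have "(x powr a)\<^sup>2 = x powr (2 * a)" for x a :: real by (simp add: power2_eq_square flip: powr_add)
  then have "K\<^sup>2 * (2 * ((c powr \<theta> * s powr \<sigma>)\<^sup>2 + (c powr \<theta>' * s powr \<sigma>')\<^sup>2))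
      = 2 * K\<^sup>2 * (c powr (2 * \<theta>) * s powr (2 * \<sigma>) + c powr (2 * \<theta>') * s powr (2 * \<sigma>'))"
    by (simp add: power_mult_distrib)
  finally show ?thesis .
qed

lemma abs_A_integrand_le:
  fixes n l :: nat and \<alpha> \<beta> t G K \<rho> \<theta> \<sigma> \<theta>' \<sigma>' :: real
  defines "q \<equiv> qexp n \<alpha> \<beta>" and "c \<equiv> real l + real n / 2"
  assumes n: "n \<ge> 1" and q: "q > 2" and t0: "0 < t" and t1: "t < 1"
    and G_pos: "0 < hypergeom (real n / 2 - 1 + \<alpha> / 2) (\<alpha> / 2) (real n / 2) t"
    and G_le: "hypergeom (real n / 2 - 1 + \<alpha> / 2) (\<alpha> / 2) (real n / 2) t \<le> G * (1 - t) powr \<rho>"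
    and F_le: "\<bar>hypergeom (c - 1 + \<alpha> / 2) (\<alpha> / 2) c t\<bar>
       \<le> K * (c powr \<theta> * (1 - t) powr \<sigma> + c powr \<theta>' * (1 - t) powr \<sigma>')"
  shows "\<bar>A_integrand n \<alpha> \<beta> l t\<bar> \<le> 2 * d_ab_const n \<beta> powr (q - 2) * G powr (q - 2) * K\<^sup>2 *
     (c powr (2 * \<theta>) * (t powr (real n / 2 + real l - 1) * (1 - t) powr (q * (\<alpha> + \<beta> - 1) + (q - 2) * \<rho> + 2 * \<sigma>))
    + c powr (2 * \<theta>') * (t powr (real n / 2 + real l - 1) * (1 - t) powr (q * (\<alpha> + \<beta> - 1) + (q - 2) * \<rho> + 2 * \<sigma>')))"
proof -
  define s where "s = 1 - t"
  define e where "e = \<alpha> + \<beta> - 1"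
  define D where "D = d_ab_const n \<beta>"
  define L where "L = real n / 2 + real l - 1"
  define Gt where "Gt = hypergeom (real n / 2 - 1 + \<alpha> / 2) (\<alpha> / 2) (real n / 2) t"
  define Ft where "Ft = hypergeom (c - 1 + \<alpha> / 2) (\<alpha> / 2) c t"
  have s: "s > 0" and D: "D > 0" using t1 d_ab_const_pos[OF n] unfolding s_def D_def by auto
  have G: "G > 0" using G_pos G_le s unfolding s_def by (smt (verit) powr_gt_zero zero_less_mult_iff)
  have "(D * s powr e * Gt) powr (q - 2) \<le> (D * s powr e * (G * s powr \<rho>)) powr (q - 2)"
    using D s G_pos G_le q unfolding Gt_def s_def by (intro powr_mono2 mult_left_mono) auto
  also have "\<dots> = ((D * G) * s powr (e + \<rho>)) powr (q - 2)"
    by (simp add: powr_add mult_ac)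
  also have "\<dots> = D powr (q - 2) * G powr (q - 2) * s powr ((q - 2) * (e + \<rho>))"
    using D s G by (simp add: powr_mult powr_powr mult.commute)
  finally have d_le: "(D * s powr e * Gt) powr (q - 2) \<le> D powr (q - 2) * G powr (q - 2) * s powr ((q - 2) * (e + \<rho>))" .
  have collect: "s powr ((q - 2) * (e + \<rho>)) * s powr (2 * e) * s powr (2 * x) = s powr (q * e + (q - 2) * \<rho> + 2 * x)"
    for x by (simp add: algebra_simps flip: powr_add)
  have F_sq: "Ft\<^sup>2 \<le> 2 * K\<^sup>2 * (c powr (2 * \<theta>) * s powr (2 * \<sigma>) + c powr (2 * \<theta>') * s powr (2 * \<sigma>'))"
    using F_le unfolding Ft_def s_def by (rule square_le_of_abs_le_powr_sum)
  have "\<bar>A_integrand n \<alpha> \<beta> l t\<bar> = (D * s powr e * Gt) powr (q - 2) * (s powr (2 * e) * t powr L) * Ft\<^sup>2"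
    using t0 unfolding A_integrand_eq[OF less_imp_le[OF t0]] q_def c_def s_def e_def D_def L_def Gt_def Ft_def
    by (simp add: mult.assoc)
  also have "\<dots> \<le> (D powr (q - 2) * G powr (q - 2) * s powr ((q - 2) * (e + \<rho>))) * (s powr (2 * e) * t powr L)
      * (2 * K\<^sup>2 * (c powr (2 * \<theta>) * s powr (2 * \<sigma>) + c powr (2 * \<theta>') * s powr (2 * \<sigma>')))"
    by (intro mult_mono d_le F_sq order_refl) auto
  also have "\<dots> = 2 * D powr (q - 2) * G powr (q - 2) * K\<^sup>2 *
     (c powr (2 * \<theta>) * (t powr L * (s powr ((q - 2) * (e + \<rho>)) * s powr (2 * e) * s powr (2 * \<sigma>)))
    + c powr (2 * \<theta>') * (t powr L * (s powr ((q - 2) * (e + \<rho>)) * s powr (2 * e) * s powr (2 * \<sigma>'))))"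
    by (simp add: algebra_simps)
  also have "\<dots> = 2 * D powr (q - 2) * G powr (q - 2) * K\<^sup>2 *
     (c powr (2 * \<theta>) * (t powr L * s powr (q * e + (q - 2) * \<rho> + 2 * \<sigma>))
    + c powr (2 * \<theta>') * (t powr L * s powr (q * e + (q - 2) * \<rho> + 2 * \<sigma>')))"
    by (simp only: collect)
  finally show ?thesis unfolding s_def e_def D_def L_def .
qed

lemma Gamma_factor_bound:
  fixes n :: nat and \<alpha> :: real
  assumes n: "n \<ge> 1" and \<alpha>: "\<alpha> < real n"
  obtains R where "R > 0" and "\<And>l::nat. Gamma (real l + (real n - \<alpha>) / 2) ^ 2 / Gamma (real l + real n / 2) ^ 2
      \<le> R * (real l + (real n - \<alpha>) / 2) powr (- \<alpha>)"
proof -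
  define z0 where "z0 = (real n - \<alpha>) / 2"
  have z0: "z0 > 0" and "z0 + \<alpha> / 2 > 0" using n \<alpha> unfolding z0_def by (auto simp: field_simps)
  then obtain K where K: "K > 0"
    and ratio: "\<And>z. z \<ge> z0 \<Longrightarrow> Gamma z / Gamma (z + \<alpha> / 2) \<le> K * z powr (- (\<alpha> / 2))"
    using Gamma_ratio_inverse_bound[OF z0] by blast
  show ?thesis
  proof (rule that[of "K\<^sup>2"])
    fix l :: nat
    define z where "z = real l + z0"
    have z: "z \<ge> z0" "z > 0" and zc: "z + \<alpha> / 2 = real l + real n / 2"
      using z0 unfolding z_def z0_def by (auto simp: field_simps)
    have "Gamma z > 0" "Gamma (z + \<alpha> / 2) > 0" using z zc n by auto
    then have "(Gamma z / Gamma (z + \<alpha> / 2))\<^sup>2 \<le> (K * z powr (- (\<alpha> / 2)))\<^sup>2"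
      by (intro power_mono ratio[OF z(1)]) simp
    also have "\<dots> = K\<^sup>2 * z powr (- \<alpha>)"
      using z by (simp add: power_mult_distrib powr_realpow[symmetric] powr_powr)
    finally show "Gamma (real l + (real n - \<alpha>) / 2) ^ 2 / Gamma (real l + real n / 2) ^ 2
        \<le> K\<^sup>2 * (real l + (real n - \<alpha>) / 2) powr (- \<alpha>)"
      using zc unfolding z_def z0_def by (simp add: power_divide)
  qed (use K in simp)
qed

lemma abs_A_coeff_le_Beta_sum:
  fixes n l :: nat and \<alpha> \<beta> R M1 M2 p1 p2 :: real
  assumes n: "n \<ge> 1" and R: "Gamma (real l + (real n - \<alpha>) / 2) ^ 2 / Gamma (real l + real n / 2) ^ 2 \<le> R"
    and p1: "p1 > -1" and p2: "p2 > -1" and M1: "M1 \<ge> 0" and M2: "M2 \<ge> 0"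
    and bound: "\<And>t. 0 < t \<Longrightarrow> t < 1 \<Longrightarrow> \<bar>A_integrand n \<alpha> \<beta> l t\<bar>
       \<le> M1 * (t powr (real n / 2 + real l - 1) * (1 - t) powr p1) + M2 * (t powr (real n / 2 + real l - 1) * (1 - t) powr p2)"
  shows "\<bar>A_coeff n \<alpha> \<beta> l\<bar>
    \<le> R * (M1 * Beta (real l + real n / 2) (p1 + 1) + M2 * Beta (real l + real n / 2) (p2 + 1))"
proof -
  define L where "L = real n / 2 + real l - 1"
  have L: "L + 1 > 0" and L1: "L + 1 = real l + real n / 2" using n unfolding L_def by auto
  have "((\<lambda>t. M1 * (t powr L * (1 - t) powr p1) + M2 * (t powr L * (1 - t) powr p2)) has_integral
      M1 * Beta (L + 1) (p1 + 1) + M2 * Beta (L + 1) (p2 + 1)) {0..1}"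
    using has_integral_Beta_real[of "L + 1" "p1 + 1"] has_integral_Beta_real[of "L + 1" "p2 + 1"] L p1 p2
    by (intro has_integral_add has_integral_mult_right) simp_all
  then have I: "\<bar>integral {0..1} (A_integrand n \<alpha> \<beta> l)\<bar> \<le> M1 * Beta (L + 1) (p1 + 1) + M2 * Beta (L + 1) (p2 + 1)"
  proof (rule abs_integral_le_of_dominated)
    fix t :: real assume "t \<in> {0..1}"
    then consider "t = 0" | "t = 1" | "0 < t \<and> t < 1" by fastforce
    then show "\<bar>A_integrand n \<alpha> \<beta> l t\<bar> \<le> M1 * (t powr L * (1 - t) powr p1) + M2 * (t powr L * (1 - t) powr p2)"
      by cases (use bound in \<open>auto simp: A_integrand_def L_def\<close>)
  qed
  have "0 \<le> Gamma (real l + (real n - \<alpha>) / 2) ^ 2 / Gamma (real l + real n / 2) ^ 2" by simp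
  moreover from this R have "0 \<le> R" by linarith
  ultimately show ?thesis using R I unfolding A_coeff_eq_integral L1[symmetric] abs_mult
    by (intro mult_mono) auto
qed

lemma shifted_powr_product_bigo:
  fixes a b u v E :: real
  assumes "u + v \<le> E"
  shows "(\<lambda>l::nat. (real l + a) powr u * (real l + b) powr v) \<in> O(\<lambda>l. real l powr E)"
proof -
  have "(\<lambda>l::nat. (real l + a) powr u * (real l + b) powr v) \<in> O(\<lambda>l. real l powr (u + v))"
    by real_asymp
  also have "(\<lambda>l::nat. real l powr (u + v)) \<in> O(\<lambda>l. real l powr E)"
    using assms by (simp add: powr_bigo_iff filterlim_real_sequentially)
  finally show ?thesis .
qed

lemma A_coeff_bigO_from_hypergeom_bounds:
  fixes n :: nat and \<alpha> \<beta> G K \<rho> \<theta> \<sigma> \<theta>' \<sigma>' E :: real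
  defines "p1 \<equiv> qexp n \<alpha> \<beta> * (\<alpha> + \<beta> - 1) + (qexp n \<alpha> \<beta> - 2) * \<rho> + 2 * \<sigma>"
    and "p2 \<equiv> qexp n \<alpha> \<beta> * (\<alpha> + \<beta> - 1) + (qexp n \<alpha> \<beta> - 2) * \<rho> + 2 * \<sigma>'"
  assumes adm: "admissible n \<alpha> \<beta>"
    and G_pos: "\<And>t. 0 < t \<Longrightarrow> t < 1 \<Longrightarrow> 0 < hypergeom (real n / 2 - 1 + \<alpha> / 2) (\<alpha> / 2) (real n / 2) t"
    and G_le: "\<And>t. 0 < t \<Longrightarrow> t < 1 \<Longrightarrow>
      hypergeom (real n / 2 - 1 + \<alpha> / 2) (\<alpha> / 2) (real n / 2) t \<le> G * (1 - t) powr \<rho>"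
    and F_le: "\<And>c t. real n / 2 \<le> c \<Longrightarrow> 0 < t \<Longrightarrow> t < 1 \<Longrightarrow> \<bar>hypergeom (c - 1 + \<alpha> / 2) (\<alpha> / 2) c t\<bar>
      \<le> K * (c powr \<theta> * (1 - t) powr \<sigma> + c powr \<theta>' * (1 - t) powr \<sigma>')"
    and p1: "p1 > -1" and p2: "p2 > -1"
    and E1: "2 * \<theta> - p1 - 1 - \<alpha> \<le> E" and E2: "2 * \<theta>' - p2 - 1 - \<alpha> \<le> E"
  shows "A_coeff n \<alpha> \<beta> \<in> O(\<lambda>l. real l powr E)"
proof -
  \<comment> \<open>\<open>A\<^sub>l\<close> is at most a Gamma ratio of order \<open>l powr (- \<alpha>)\<close> times two Beta integrals
    \<open>Beta (l + n/2) (p + 1)\<close>, each of order \<open>l powr (- p - 1)\<close>.\<close>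
  define m where "m = 2 * d_ab_const n \<beta> powr (qexp n \<alpha> \<beta> - 2) * G powr (qexp n \<alpha> \<beta> - 2) * K\<^sup>2"
  define h where "h e l = (real l + (real n - \<alpha>) / 2) powr (- \<alpha>) * (real l + real n / 2) powr e" for e l
  have n: "n \<ge> 1" using adm unfolding admissible_def by simp
  have q: "qexp n \<alpha> \<beta> > 2" and \<alpha>: "\<alpha> < real n" using admissible_consequences[OF adm] by auto
  have m: "m \<ge> 0" unfolding m_def by simp
  have c0: "real n / 2 > 0" and "p1 + 1 > 0" and "p2 + 1 > 0" using n p1 p2 by auto
  then obtain B1 B2 where B: "B1 > 0" "B2 > 0"
    and B1: "\<And>x. x \<ge> real n / 2 \<Longrightarrow> Beta x (p1 + 1) \<le> B1 * x powr (- (p1 + 1))"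
    and B2: "\<And>x. x \<ge> real n / 2 \<Longrightarrow> Beta x (p2 + 1) \<le> B2 * x powr (- (p2 + 1))"
    using Beta_le_powr[OF c0] by metis
  obtain R where R: "R > 0" and R_le: "\<And>l::nat. Gamma (real l + (real n - \<alpha>) / 2) ^ 2 / Gamma (real l + real n / 2) ^ 2
      \<le> R * (real l + (real n - \<alpha>) / 2) powr (- \<alpha>)"
    using Gamma_factor_bound[OF n \<alpha>] by blast
  have A_le: "\<bar>A_coeff n \<alpha> \<beta> l\<bar> \<le> R * m * max B1 B2 * (h (2 * \<theta> - p1 - 1) l + h (2 * \<theta>' - p2 - 1) l)" for l
  proof -
    define c where "c = real l + real n / 2"
    define z where "z = real l + (real n - \<alpha>) / 2"
    have c: "c \<ge> real n / 2" "c > 0" using n unfolding c_def by auto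
    have z: "z > 0" using \<alpha> unfolding z_def by (simp add: field_simps)
    have "\<bar>A_coeff n \<alpha> \<beta> l\<bar> \<le> R * z powr (- \<alpha>) * (m * c powr (2 * \<theta>) * Beta c (p1 + 1) + m * c powr (2 * \<theta>') * Beta c (p2 + 1))"
      unfolding c_def z_def
    proof (rule abs_A_coeff_le_Beta_sum[OF n R_le p1 p2])
      fix t :: real assume t: "0 < t" "t < 1"
      show "\<bar>A_integrand n \<alpha> \<beta> l t\<bar> \<le> m * (real l + real n / 2) powr (2 * \<theta>) * (t powr (real n / 2 + real l - 1) * (1 - t) powr p1)
          + m * (real l + real n / 2) powr (2 * \<theta>') * (t powr (real n / 2 + real l - 1) * (1 - t) powr p2)"
        using abs_A_integrand_le[OF n q t G_pos[OF t] G_le[OF t] F_le[OF _ t]]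
        unfolding m_def p1_def p2_def by (simp add: distrib_left mult.assoc)
    qed (use m in simp_all)
    also have "\<dots> \<le> R * z powr (- \<alpha>) * (m * c powr (2 * \<theta>) * (B1 * c powr (- (p1 + 1)))
        + m * c powr (2 * \<theta>') * (B2 * c powr (- (p2 + 1))))"
      using B1[OF c(1)] B2[OF c(1)] m R by (intro mult_left_mono add_mono) auto
    also have "\<dots> = R * m * (B1 * h (2 * \<theta> - p1 - 1) l + B2 * h (2 * \<theta>' - p2 - 1) l)"
      unfolding h_def c_def[symmetric] z_def[symmetric] using c by (simp add: algebra_simps flip: powr_add)
    also have "\<dots> \<le> R * m * max B1 B2 * (h (2 * \<theta> - p1 - 1) l + h (2 * \<theta>' - p2 - 1) l)"
      using R m unfolding h_def by (simp add: mult.assoc distrib_left add_mono mult_left_mono mult_right_mono)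
    finally show ?thesis .
  qed
  have "A_coeff n \<alpha> \<beta> \<in> O(\<lambda>l. h (2 * \<theta> - p1 - 1) l + h (2 * \<theta>' - p2 - 1) l)"
    using A_le unfolding h_def by (intro bigoI[of _ "R * m * max B1 B2"] always_eventually) auto
  also have "(\<lambda>l. h (2 * \<theta> - p1 - 1) l + h (2 * \<theta>' - p2 - 1) l) \<in> O(\<lambda>l. real l powr E)"
    unfolding h_def using E1 E2 by (intro sum_in_bigo shifted_powr_product_bigo) auto
  finally show ?thesis .
qed

lemma A_coeff_bigO_nonpos:
  assumes adm: "admissible n \<alpha> \<beta>" and \<alpha>: "\<alpha> \<le> 0"
  shows "A_coeff n \<alpha> \<beta> \<in> O(\<lambda>l. real l powr (- (1 + qexp n \<alpha> \<beta> * (\<alpha> + \<beta> - 1))))"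
proof -
  define b where "b = \<alpha> / 2"
  have c0: "real n / 2 > 0" and b: "b \<le> 0" and cb: "real n / 2 - 1 + b > 0"
    using adm \<alpha> admissible_consequences(3)[OF adm] unfolding admissible_def b_def by auto
  obtain K where F: "\<And>c t. c \<ge> real n / 2 \<Longrightarrow> 0 \<le> t \<Longrightarrow> t < 1 \<Longrightarrow>
      hypergeom (c - 1 + b) b c t \<le> K * ((1 - t) powr (- b) + c powr b)"
    using hypergeom_le_nonpos_b[OF c0 b cb] by blast
  show ?thesis
  proof (rule A_coeff_bigO_from_hypergeom_bounds[OF adm, where G = 1 and \<rho> = 0 and K = K
        and \<theta> = 0 and \<sigma> = "- b" and \<theta>' = b and \<sigma>' = 0, folded b_def])
    fix t :: real assume t: "0 < t" "t < 1"
    have "0 < (1 - t) powr (- b)" using t by simp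
    also have "\<dots> \<le> hypergeom (real n / 2 - 1 + b) b (real n / 2) t"
      using hypergeom_nonpos_b_between(1)[OF cb b] t by simp
    finally show "0 < hypergeom (real n / 2 - 1 + b) b (real n / 2) t" .
    show "hypergeom (real n / 2 - 1 + b) b (real n / 2) t \<le> 1 * (1 - t) powr 0"
      using hypergeom_nonpos_b_between(2)[OF cb b] t by simp
  next
    fix c t :: real assume c: "real n / 2 \<le> c" and t: "0 < t" "t < 1"
    have "c - 1 + b > 0" using c cb by simp
    then have "0 \<le> hypergeom (c - 1 + b) b c t"
      using hypergeom_nonpos_b_between(1)[of c b t] b t by (smt (verit) powr_ge_zero)
    then show "\<bar>hypergeom (c - 1 + b) b c t\<bar> \<le> K * (c powr 0 * (1 - t) powr (- b) + c powr b * (1 - t) powr 0)"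
      using F[OF c] t c c0 by simp
  qed (use admissible_consequences(2)[OF adm] \<alpha> in \<open>simp_all add: b_def algebra_simps\<close>)
qed

lemma A_coeff_bigO_small:
  assumes adm: "admissible n \<alpha> \<beta>" and \<alpha>0: "0 < \<alpha>" and \<alpha>1: "\<alpha> < 1"
  shows "A_coeff n \<alpha> \<beta> \<in> O(\<lambda>l. real l powr (- (1 + qexp n \<alpha> \<beta> * (\<alpha> + \<beta> - 1))))"
proof -
  define b where "b = \<alpha> / 2"
  define g where "g = qexp n \<alpha> \<beta> * (\<alpha> + \<beta> - 1)"
  \<comment> \<open>Any \<open>\<theta> < b\<close> with \<open>2 * \<theta> > \<alpha> - g - 1\<close> keeps the Beta integral finite
    and does not change the final exponent.\<close>
  define \<theta> where "\<theta> = max 0 (b - (g + 1) / 4)"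
  have c0: "real n / 2 \<ge> 1" using adm unfolding admissible_def by simp
  have g: "g > -1" using admissible_consequences(2)[OF adm] unfolding g_def .
  have b: "b > 0" "2 * b < 1" using \<alpha>0 \<alpha>1 unfolding b_def by auto
  have \<theta>: "0 \<le> \<theta>" "\<theta> < b" "\<theta> \<le> 1 - b" "2 * \<theta> \<ge> \<alpha> - (g + 1) / 2"
    using b g unfolding \<theta>_def b_def by (auto simp: max_def field_simps)
  obtain K where F: "\<And>c t. c \<ge> real n / 2 \<Longrightarrow> 0 \<le> t \<Longrightarrow> t < 1 \<Longrightarrow>
      1 \<le> hypergeom (c - 1 + b) b c t \<and> hypergeom (c - 1 + b) b c t \<le> K * c powr \<theta> * (1 - t) powr (\<theta> - b)"
    using hypergeom_le_powr[OF c0 b(1) \<theta>(2,1,3)] by blast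
  obtain G where G: "\<And>t. 0 \<le> t \<Longrightarrow> t < 1 \<Longrightarrow>
      1 \<le> hypergeom (real n / 2 - 1 + b) b (real n / 2) t \<and> hypergeom (real n / 2 - 1 + b) b (real n / 2) t \<le> G"
    using hypergeom_bounded_small_b[OF c0 b] by blast
  have p_gt: "-1 < g + (qexp n \<alpha> \<beta> - 2) * 0 + 2 * (\<theta> - b)"
    and E: "2 * \<theta> - (g + (qexp n \<alpha> \<beta> - 2) * 0 + 2 * (\<theta> - b)) - 1 - \<alpha> \<le> - (1 + g)"
    using g \<theta> unfolding b_def by (simp_all add: field_simps)
  show ?thesis
  proof (rule A_coeff_bigO_from_hypergeom_bounds[OF adm, where G = G and \<rho> = 0 and K = K
        and \<theta> = \<theta> and \<sigma> = "\<theta> - b" and \<theta>' = \<theta> and \<sigma>' = "\<theta> - b", folded b_def g_def])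
    fix t :: real assume t: "0 < t" "t < 1"
    then show "0 < hypergeom (real n / 2 - 1 + b) b (real n / 2) t"
      and "hypergeom (real n / 2 - 1 + b) b (real n / 2) t \<le> G * (1 - t) powr 0"
      using G[of t] by auto
  next
    fix c t :: real assume c: "real n / 2 \<le> c" and t: "0 < t" "t < 1"
    have "1 \<le> hypergeom (c - 1 + b) b c t" "hypergeom (c - 1 + b) b c t \<le> K * (c powr \<theta> * (1 - t) powr (\<theta> - b))"
      using F[OF c, of t] t by (auto simp: mult.assoc)
    then show "\<bar>hypergeom (c - 1 + b) b c t\<bar>
        \<le> K * (c powr \<theta> * (1 - t) powr (\<theta> - b) + c powr \<theta> * (1 - t) powr (\<theta> - b))"
      by (simp add: distrib_left abs_le_iff)
  qed (use p_gt E in \<open>auto simp: g_def\<close>)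
qed

lemma A_coeff_bigO_one:
  assumes adm: "admissible n \<alpha> \<beta>" and \<alpha>: "\<alpha> = 1" and \<epsilon>: "\<epsilon> > 0"
  shows "A_coeff n \<alpha> \<beta> \<in> O(\<lambda>l. real l powr (- 1 - qexp n \<alpha> \<beta> * \<beta> + \<epsilon>))"
proof -
  define q where "q = qexp n \<alpha> \<beta>"
  define b where "b = \<alpha> / 2"
  \<comment> \<open>With \<open>\<theta> = 1/2 - \<delta>\<close> the exponent loses \<open>(q - 2) * \<delta> \<le> \<epsilon>\<close>,
    and \<open>q * \<delta> \<le> 1/2\<close> keeps the Beta integral finite.\<close>
  define \<delta> where "\<delta> = min \<epsilon> (1 / 2) / q"
  have c0: "real n / 2 \<ge> 1" and \<beta>: "\<beta> \<ge> 0" using adm unfolding admissible_def by auto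
  have q: "q > 2" using admissible_consequences(1)[OF adm] unfolding q_def .
  have q\<beta>: "q * \<beta> \<ge> 0" using q \<beta> by simp
  have b: "b = 1 / 2" unfolding b_def \<alpha> by simp
  have \<delta>: "\<delta> > 0" "q * \<delta> \<le> \<epsilon>" "q * \<delta> \<le> 1 / 2" "\<delta> \<le> 1 / 2"
    using q \<epsilon> unfolding \<delta>_def by (auto simp: field_simps min_def)
  have \<theta>: "b > 0" "b - \<delta> < b" "0 \<le> b - \<delta>" "b - \<delta> \<le> 1 - b" and \<sigma>: "b - \<delta> - b = - \<delta>"
    using b \<delta> by auto
  obtain K where F: "\<And>c t. c \<ge> real n / 2 \<Longrightarrow> 0 \<le> t \<Longrightarrow> t < 1 \<Longrightarrow>
      1 \<le> hypergeom (c - 1 + b) b c t \<and> hypergeom (c - 1 + b) b c t \<le> K * c powr (b - \<delta>) * (1 - t) powr (- \<delta>)"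
    using hypergeom_le_powr[OF c0 \<theta>] unfolding \<sigma> by blast
  have p: "q * (\<alpha> + \<beta> - 1) + (q - 2) * - \<delta> + 2 * - \<delta> = q * \<beta> - q * \<delta>"
    using \<alpha> by (simp add: algebra_simps)
  have p_gt: "q * (\<alpha> + \<beta> - 1) + (q - 2) * - \<delta> + 2 * - \<delta> > -1"
    unfolding p using \<delta> q\<beta> by linarith
  have E: "2 * (b - \<delta>) - (q * (\<alpha> + \<beta> - 1) + (q - 2) * - \<delta> + 2 * - \<delta>) - 1 - \<alpha> \<le> - 1 - q * \<beta> + \<epsilon>"
    unfolding p using \<delta> b \<alpha> by (simp add: algebra_simps)
  show ?thesis
  proof (rule A_coeff_bigO_from_hypergeom_bounds[OF adm, where G = "K * (real n / 2) powr (b - \<delta>)"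
        and \<rho> = "- \<delta>" and K = K and \<theta> = "b - \<delta>" and \<sigma> = "- \<delta>" and \<theta>' = "b - \<delta>" and \<sigma>' = "- \<delta>", folded b_def q_def])
    fix t :: real assume t: "0 < t" "t < 1"
    then show "0 < hypergeom (real n / 2 - 1 + b) b (real n / 2) t"
      and "hypergeom (real n / 2 - 1 + b) b (real n / 2) t \<le> K * (real n / 2) powr (b - \<delta>) * (1 - t) powr (- \<delta>)"
      using F[OF order_refl, of t] by auto
  next
    fix c t :: real assume c: "real n / 2 \<le> c" and t: "0 < t" "t < 1"
    have "1 \<le> hypergeom (c - 1 + b) b c t" "hypergeom (c - 1 + b) b c t \<le> K * (c powr (b - \<delta>) * (1 - t) powr (- \<delta>))"
      using F[OF c, of t] t by (auto simp: mult.assoc)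
    then show "\<bar>hypergeom (c - 1 + b) b c t\<bar>
        \<le> K * (c powr (b - \<delta>) * (1 - t) powr (- \<delta>) + c powr (b - \<delta>) * (1 - t) powr (- \<delta>))"
      by (simp add: distrib_left abs_le_iff)
  qed (use p_gt E in \<open>auto simp: q_def\<close>)
qed

lemma A_coeff_bigO_large:
  assumes adm: "admissible n \<alpha> \<beta>" and \<alpha>: "\<alpha> > 1"
  shows "A_coeff n \<alpha> \<beta> \<in> O(\<lambda>l. real l powr (- 1 - qexp n \<alpha> \<beta> * \<beta>))"
proof -
  define q where "q = qexp n \<alpha> \<beta>"
  define b where "b = \<alpha> / 2"
  have c0: "real n / 2 \<ge> 1" and \<beta>: "\<beta> \<ge> 0" using adm unfolding admissible_def by auto
  have q\<beta>: "q * \<beta> \<ge> 0" using admissible_consequences(1)[OF adm] \<beta> unfolding q_def by simp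
  have b: "b > 1 / 2" using \<alpha> unfolding b_def by simp
  obtain K where F: "\<And>c t. c \<ge> real n / 2 \<Longrightarrow> 0 \<le> t \<Longrightarrow> t < 1 \<Longrightarrow>
      1 \<le> hypergeom (c - 1 + b) b c t \<and>
      hypergeom (c - 1 + b) b c t \<le> K * ((1 - t) powr (- b) + c powr (1 - b) * (1 - t) powr (1 - 2 * b))"
    using hypergeom_le_large_b[OF c0 b] by blast
  obtain G where G: "\<And>t. 0 \<le> t \<Longrightarrow> t < 1 \<Longrightarrow> 1 \<le> hypergeom (real n / 2 - 1 + b) b (real n / 2) t
      \<and> hypergeom (real n / 2 - 1 + b) b (real n / 2) t \<le> G * (1 - t) powr (1 - 2 * b)"
    using hypergeom_fixed_c_le_large_b[OF c0 b] by blast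
  have p: "q * (\<alpha> + \<beta> - 1) + (q - 2) * (1 - 2 * b) + 2 * - b = q * \<beta> + \<alpha> - 2"
    and p': "q * (\<alpha> + \<beta> - 1) + (q - 2) * (1 - 2 * b) + 2 * (1 - 2 * b) = q * \<beta>"
    unfolding b_def by (simp_all add: algebra_simps)
  have p_gt: "q * (\<alpha> + \<beta> - 1) + (q - 2) * (1 - 2 * b) + 2 * - b > -1"
    and p'_gt: "q * (\<alpha> + \<beta> - 1) + (q - 2) * (1 - 2 * b) + 2 * (1 - 2 * b) > -1"
    and E: "2 * 0 - (q * (\<alpha> + \<beta> - 1) + (q - 2) * (1 - 2 * b) + 2 * - b) - 1 - \<alpha> \<le> - 1 - q * \<beta>"
    and E': "2 * (1 - b) - (q * (\<alpha> + \<beta> - 1) + (q - 2) * (1 - 2 * b) + 2 * (1 - 2 * b)) - 1 - \<alpha> \<le> - 1 - q * \<beta>"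
    unfolding p p' using q\<beta> \<alpha> unfolding b_def by auto
  show ?thesis
  proof (rule A_coeff_bigO_from_hypergeom_bounds[OF adm, where G = G and \<rho> = "1 - 2 * b" and K = K
        and \<theta> = 0 and \<sigma> = "- b" and \<theta>' = "1 - b" and \<sigma>' = "1 - 2 * b", folded b_def q_def])
    fix t :: real assume t: "0 < t" "t < 1"
    then show "0 < hypergeom (real n / 2 - 1 + b) b (real n / 2) t"
      and "hypergeom (real n / 2 - 1 + b) b (real n / 2) t \<le> G * (1 - t) powr (1 - 2 * b)"
      using G[of t] by auto
  next
    fix c t :: real assume c: "real n / 2 \<le> c" and t: "0 < t" "t < 1"
    then show "\<bar>hypergeom (c - 1 + b) b c t\<bar>
        \<le> K * (c powr 0 * (1 - t) powr (- b) + c powr (1 - b) * (1 - t) powr (1 - 2 * b))"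
      using F[OF c, of t] c0 by auto
  qed (use p_gt p'_gt E E' in \<open>auto simp: q_def\<close>)
qed

theorem lemma2p8:
  fixes n :: nat and \<alpha> \<beta> :: real
  assumes "n \<ge> 3" and "\<beta> \<ge> 0" and "0 < \<alpha> + \<beta>" and "\<alpha> + \<beta> < real n - \<beta>"
    and "(real n - \<alpha> - 2 * \<beta>) / (2 * real n) + (real n - \<alpha>) / (2 * (real n - 1)) < 1"
  shows "(\<alpha> < 1 \<longrightarrow> (\<lambda>l. A_coeff n \<alpha> \<beta> l)
             \<in> O(\<lambda>l. real l powr (- (1 + qexp n \<alpha> \<beta> * (\<alpha> + \<beta> - 1)))))
       \<and> (\<alpha> = 1 \<longrightarrow> (\<forall>\<epsilon>>0. (\<lambda>l. A_coeff n \<alpha> \<beta> l)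
             \<in> O(\<lambda>l. real l powr (- 1 - qexp n \<alpha> \<beta> * \<beta> + \<epsilon>))))
       \<and> (\<alpha> > 1 \<longrightarrow> (\<lambda>l. A_coeff n \<alpha> \<beta> l)
             \<in> O(\<lambda>l. real l powr (- 1 - qexp n \<alpha> \<beta> * \<beta>)))"
proof -
  have adm: "admissible n \<alpha> \<beta>" using assms unfolding admissible_def by simp
  have "\<alpha> < 1 \<Longrightarrow> A_coeff n \<alpha> \<beta> \<in> O(\<lambda>l. real l powr (- (1 + qexp n \<alpha> \<beta> * (\<alpha> + \<beta> - 1))))"
    using A_coeff_bigO_nonpos[OF adm] A_coeff_bigO_small[OF adm] by (cases "\<alpha> \<le> 0") auto
  then show ?thesis
    using A_coeff_bigO_one[OF adm] A_coeff_bigO_large[OF adm] by auto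
qed

end
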